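(* In $V_{1/2}^+$, every field $W^n(z)$ ($n$ odd) is a normally ordered polynomial in the fields $\partial^iW^1(z)$, $i\ge0$. Consequently $V_{1/2}^+$ is isomorphic to the simple Virasoro vertex algebra $L(\tfrac12,0)$ of central charge $\frac12$ (generated by $W^1(z)$).
   Context: $V_c^+$ is the vacuum vertex algebra of $\widehat{\mathcal D}^+$ with central charge $c$: $\widehat{\mathcal D}^+=\mathcal D^+\oplus\mathbb CC$ with $\mathcal D^+=\{a:\sigma(a)=-a\}$ inside the Lie algebra of differential operators $t^kf(D)$ on the circle ($D=t\frac d{dt}$), $\sigma(t)=t$, $\sigma(D)=-D-1$, central extension by the cocycle $\Psi(t^rf(D),t^{-r}g(D))=\sum_{-r\le j\le-1}f(j)g(j+r)$ ($r\ge0$); $V_c^+$ is the irreducible highest weight module with highest weight zero on $\mathcal D^+_0$ and $C=c$, with fields $W^n(z)=\sum_kW^n_kz^{-k-n-1}$, $W^n_k=-\frac12t^k([D]_n-[-D-k-1]_n)$, $n$ odd. The modes $W^1_k$ satisfy $[W^1_m,W^1_n]=(m-n)W^1_{m+n}+\delta_{m,-n}\frac{m^3-m}{12}C$. $L(c,h)$ denotes the irreducible highest weight Virasoro module; $L(\frac12,0)$ carries the simple Virasoro vertex algebra structure. *)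

theory Defs
  imports "HOL-Analysis.Analysis" "HOL-Computational_Algebra.Polynomial"
begin

text \<open>Elements of the Lie algebra of differential operators on the circle:
  a finite sum  sum_k t^k f_k(D)  is encoded as the function k \<mapsto> f_k
  (a complex polynomial), with finite support.\<close>

type_synonym dop = "int \<Rightarrow> complex poly"

definition dsupp :: "dop \<Rightarrow> int set" where
  "dsupp a = {k. a k \<noteq> 0}"

definition pshift :: "complex poly \<Rightarrow> int \<Rightarrow> complex poly" where
  "pshift f s = pcompose f [:of_int s, 1:]"

text \<open>Bracket: [t^r f(D), t^s g(D)] = t^(r+s) (f(D+s) g(D) - g(D+r) f(D)),
  extended bilinearly.\<close>
definition dbracket :: "dop \<Rightarrow> dop \<Rightarrow> dop" where
  "dbracket a b = (\<lambda>k. \<Sum>r\<in>dsupp a.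
      pshift (a r) (k - r) * b (k - r) - pshift (b (k - r)) r * a r)"

text \<open>Anti-involution sigma with sigma(t)=t, sigma(D) = -D-1:
  sigma(t^k f(D)) = f(-D-1) t^k = t^k f(-D-k-1).\<close>
definition dsigma :: "dop \<Rightarrow> dop" where
  "dsigma a = (\<lambda>k. pcompose (a k) [:- of_int k - 1, -1:])"

definition Dplus :: "dop set" where
  "Dplus = {a. finite (dsupp a) \<and> dsigma a = (\<lambda>k. - a k)}"

definition psi1 :: "int \<Rightarrow> complex poly \<Rightarrow> complex poly \<Rightarrow> complex" where
  "psi1 r f g = (if 0 \<le> r
      then (\<Sum>j\<in>{-r..-1}. poly f (of_int j) * poly g (of_int (j + r)))
      else - (\<Sum>j\<in>{r..-1}. poly g (of_int j) * poly f (of_int (j - r))))"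

definition Psi :: "dop \<Rightarrow> dop \<Rightarrow> complex" where
  "Psi a b = (\<Sum>r\<in>dsupp a. psi1 r (a r) (b (- r)))"

definition dscale :: "complex \<Rightarrow> dop \<Rightarrow> dop" where
  "dscale z a = (\<lambda>k. smult z (a k))"

definition ffact_poly :: "nat \<Rightarrow> complex poly" where
  "ffact_poly n = (\<Prod>i<n. [:- of_nat i, 1:])"

definition Wmode :: "nat \<Rightarrow> int \<Rightarrow> dop" where
  "Wmode n k = (\<lambda>j. if j = k
      then smult (- 1/2) (ffact_poly n - pcompose (ffact_poly n) [:- of_int k - 1, -1:])
      else 0)"

text \<open>A representation of the central extension of D^+ on the complex vector space
  (UNIV, +, sc), with the central element C acting as the scalar c.\<close>
definition Dplus_rep ::
  "(complex \<Rightarrow> 'v::ab_group_add \<Rightarrow> 'v) \<Rightarrow> complex \<Rightarrow> (dop \<Rightarrow> 'v \<Rightarrow> 'v) \<Rightarrow> bool" where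
  "Dplus_rep sc c \<rho> \<longleftrightarrow>
     vector_space sc \<and>
     (\<forall>a\<in>Dplus. Vector_Spaces.linear sc sc (\<rho> a)) \<and>
     (\<forall>a\<in>Dplus. \<forall>b\<in>Dplus. \<forall>z w v.
        \<rho> (\<lambda>k. dscale z a k + dscale w b k) v = sc z (\<rho> a v) + sc w (\<rho> b v)) \<and>
     (\<forall>a\<in>Dplus. \<forall>b\<in>Dplus. \<forall>v.
        \<rho> a (\<rho> b v) - \<rho> b (\<rho> a v) = \<rho> (dbracket a b) v + sc (c * Psi a b) v)"

text \<open>(V, rho, v0) is an irreducible highest weight module of hat D^+ with highest weight
  zero on D^+_0 and central charge c, i.e. a model of V_c^+ with vacuum v0.\<close>
definition is_Vplus ::
  "(complex \<Rightarrow> 'v::ab_group_add \<Rightarrow> 'v) \<Rightarrow> complex \<Rightarrow> (dop \<Rightarrow> 'v \<Rightarrow> 'v) \<Rightarrow> 'v \<Rightarrow> bool" where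
  "is_Vplus sc c \<rho> v0 \<longleftrightarrow>
     Dplus_rep sc c \<rho> \<and> v0 \<noteq> 0 \<and>
     (\<forall>a\<in>Dplus. (\<forall>j\<le>0. a j = 0) \<longrightarrow> \<rho> a v0 = 0) \<and>
     (\<forall>a\<in>Dplus. (\<forall>j. j \<noteq> 0 \<longrightarrow> a j = 0) \<longrightarrow> \<rho> a v0 = 0) \<and>
     (\<forall>S. module.subspace sc S \<and> (\<forall>a\<in>Dplus. \<forall>v\<in>S. \<rho> a v \<in> S)
          \<longrightarrow> S = {0} \<or> S = UNIV)"

text \<open>The modes L : int => (V => V) make (V, sc) an irreducible highest weight
  Virasoro module with central charge c and highest weight h, highest weight vector v0,
  i.e. a model of L(c,h).\<close>
definition is_L_vir ::
  "(complex \<Rightarrow> 'v::ab_group_add \<Rightarrow> 'v) \<Rightarrow> (int \<Rightarrow> 'v \<Rightarrow> 'v) \<Rightarrow> complex \<Rightarrow> complex \<Rightarrow> 'v \<Rightarrow> bool" where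
  "is_L_vir sc L c h v0 \<longleftrightarrow>
     vector_space sc \<and>
     (\<forall>k. Vector_Spaces.linear sc sc (L k)) \<and>
     (\<forall>m n v. L m (L n v) - L n (L m v) =
        sc (of_int (m - n)) (L (m + n) v)
        + (if m = - n then sc (of_int (m^3 - m) / 12 * c) v else 0)) \<and>
     v0 \<noteq> 0 \<and> (\<forall>k>0. L k v0 = 0) \<and> L 0 v0 = sc h v0 \<and>
     (\<forall>S. module.subspace sc S \<and> (\<forall>k. \<forall>v\<in>S. L k v \<in> S) \<longrightarrow> S = {0} \<or> S = UNIV)"

end

theory Submission
  imports Defs "HOL-Library.Function_Algebras"
begin

text \<open>
  Write \<open>D'\<close> for \<open>D + (k + 1)/2\<close> in degree \<open>k\<close>. As a Lie algebra, \<open>D\<^sup>+\<close> is generated by the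
  modes of \<open>D'\<close> (the Virasoro modes \<open>-W\<^sup>1\<^sub>k\<close>) and of \<open>D'\<^sup>3\<close>. At central charge \<open>1/2\<close> the vector
  \<open>(t\<^sup>-\<^sup>4 D'\<^sup>3 + 6/7 (t\<^sup>-\<^sup>2 D')\<^sup>2 - 43/28 t\<^sup>-\<^sup>4 D') v\<^sub>0\<close> is annihilated by all positive modes,
  and an irreducible highest weight module has no such vectors of positive conformal weight, so
  it vanishes. Commuting with \<open>t\<^sup>-\<^sup>1 D'\<close> and then with the Virasoro modes, every mode of \<open>D'\<^sup>3\<close>,
  hence all of \<open>D\<^sup>+\<close>, preserves the Virasoro submodule generated by \<open>v\<^sub>0\<close>; by irreducibility this
  submodule is \<open>V\<close>.

  The same argument applies to the contragredient module, a highest weight module generated by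
  the coordinate functional of \<open>v\<^sub>0\<close>. If a Virasoro submodule \<open>T\<close> does not contain \<open>v\<^sub>0\<close>, then
  every functional in the Virasoro submodule generated by that coordinate vanishes on \<open>T\<close>; their
  common kernel is a \<open>D\<^sup>+\<close>-submodule not containing \<open>v\<^sub>0\<close>, hence zero, so \<open>T = 0\<close>.
\<close>

section \<open>Symbols of homogeneous elements\<close>

definition dhom :: "int \<Rightarrow> complex poly \<Rightarrow> dop" where
  "dhom k f = (\<lambda>j. if j = k then f else 0)"

definition preflect :: "int \<Rightarrow> complex poly \<Rightarrow> complex poly" where
  "preflect k f = pcompose f [:- of_int k - 1, -1:]"

definition sigma_odd :: "int \<Rightarrow> complex poly \<Rightarrow> bool" where
  "sigma_odd k f \<longleftrightarrow> (\<forall>x. poly f (- x - of_int k - 1) = - poly f x)"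

text \<open>In degree \<open>k\<close> the anti-involution \<open>\<sigma>\<close> acts on \<open>D' = D + (k + 1)/2\<close> as \<open>D' \<mapsto> -D'\<close>,
  so the degree-\<open>k\<close> part of \<open>D\<^sup>+\<close> consists of the \<open>t\<^sup>k p(D')\<close> with \<open>p\<close> odd; \<open>W\<^sup>1\<^sub>k = -t\<^sup>k D'\<close>.\<close>

definition cvar :: "int \<Rightarrow> complex poly" where
  "cvar k = [:(of_int k + 1) / 2, 1:]"

definition pbracket :: "int \<Rightarrow> complex poly \<Rightarrow> int \<Rightarrow> complex poly \<Rightarrow> complex poly" where
  "pbracket j f k g = pshift f k * g - pshift g j * f"

definition psi_hom :: "int \<Rightarrow> complex poly \<Rightarrow> int \<Rightarrow> complex poly \<Rightarrow> complex" where
  "psi_hom j f k g = (if j + k = 0 then psi1 j f g else 0)"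

lemma poly_ext: "(\<And>x. poly p x = poly q x) \<Longrightarrow> (p :: complex poly) = q"
  by (simp add: poly_eq_poly_eq_iff[symmetric] fun_eq_iff)

lemma poly_pshift [simp]: "poly (pshift f s) x = poly f (x + of_int s)"
  by (simp add: pshift_def poly_pcompose algebra_simps)

lemma pshift_0_left [simp]: "pshift 0 s = 0"
  by (simp add: pshift_def)

lemma pshift_0_right [simp]: "pshift f 0 = f"
  by (rule poly_ext) simp

lemma pshift_minus [simp]: "pshift (- f) s = - pshift f s"
  by (rule poly_ext) simp

lemma pshift_pshift: "pshift (pshift f s) t = pshift f (s + t)"
  by (rule poly_ext) (simp add: algebra_simps)

lemma pshift_eq_0_iff [simp]: "pshift f s = 0 \<longleftrightarrow> f = 0"
proof
  assume "pshift f s = 0"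
  then have "pshift (pshift f s) (- s) = 0"
    by simp
  then show "f = 0"
    by (simp add: pshift_pshift)
qed simp

lemma poly_preflect [simp]: "poly (preflect k f) x = poly f (- x - of_int k - 1)"
  by (simp add: preflect_def poly_pcompose algebra_simps)

lemma poly_cvar [simp]: "poly (cvar k) x = x + (of_int k + 1) / 2"
  by (simp add: cvar_def algebra_simps)

lemma sigma_odd_iff_preflect: "sigma_odd k f \<longleftrightarrow> preflect k f = - f"
proof
  assume "preflect k f = - f"
  then have "poly (preflect k f) x = poly (- f) x" for x
    by simp
  then show "sigma_odd k f"
    by (simp add: sigma_odd_def)
qed (auto simp: sigma_odd_def intro: poly_ext)

lemma sigma_oddD: "sigma_odd k f \<Longrightarrow> y = - x - of_int k - 1 \<Longrightarrow> poly f y = - poly f x"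
  unfolding sigma_odd_def by auto

lemma sigma_odd_zero [simp]: "sigma_odd k 0"
  by (simp add: sigma_odd_def)

lemma sigma_odd_add: "sigma_odd k f \<Longrightarrow> sigma_odd k g \<Longrightarrow> sigma_odd k (f + g)"
  by (simp add: sigma_odd_def)

lemma sigma_odd_diff: "sigma_odd k f \<Longrightarrow> sigma_odd k g \<Longrightarrow> sigma_odd k (f - g)"
  by (simp add: sigma_odd_def)

lemma sigma_odd_minus: "sigma_odd k f \<Longrightarrow> sigma_odd k (- f)"
  by (simp add: sigma_odd_def)

lemma sigma_odd_smult: "sigma_odd k f \<Longrightarrow> sigma_odd k (smult z f)"
  by (simp add: sigma_odd_def)

lemma sigma_odd_cvar: "sigma_odd k (cvar k)"
  by (simp add: sigma_odd_def field_simps)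

lemma sigma_odd_cvar_cube: "sigma_odd k (cvar k ^ 3)"
  by (simp add: sigma_odd_def field_simps power3_eq_cube)

lemma sigma_odd_pbracket:
  assumes f: "sigma_odd j f" and g: "sigma_odd k g"
  shows "sigma_odd (j + k) (pbracket j f k g)"
  unfolding sigma_odd_def
proof
  fix x :: complex
  have "poly f (- x - of_int (j + k) - 1 + of_int k) = - poly f x"
    "poly f (- x - of_int (j + k) - 1) = - poly f (x + of_int k)"
    "poly g (- x - of_int (j + k) - 1 + of_int j) = - poly g x"
    "poly g (- x - of_int (j + k) - 1) = - poly g (x + of_int j)"
    by (rule sigma_oddD[OF f] sigma_oddD[OF g]; simp)+
  then show "poly (pbracket j f k g) (- x - of_int (j + k) - 1) = - poly (pbracket j f k g) x"
    by (simp add: pbracket_def)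
qed

lemma sigma_odd_linear:
  assumes f: "sigma_odd k f" and deg: "degree f \<le> 1"
  shows "f = smult (coeff f 1) (cvar k)"
proof -
  have f_eq: "f = [:coeff f 0, coeff f 1:]"
    using deg by (auto simp: poly_eq_iff coeff_pCons coeff_eq_0 split: nat.split)
  have "poly f (- 0 - of_int k - 1) = - poly f 0"
    by (rule sigma_oddD[OF f]) simp
  then have "coeff f 0 = coeff f 1 * (of_int k + 1) / 2"
    by (subst (asm) (1 2) f_eq) (simp add: field_simps)
  then show ?thesis
    by (subst f_eq, intro poly_ext) (simp add: field_simps)
qed

lemma pbracket_0_left [simp]: "pbracket j 0 k g = 0"
  by (simp add: pbracket_def)

lemma poly_pbracket [simp]:
  "poly (pbracket j f k g) x = poly f (x + of_int k) * poly g x - poly g (x + of_int j) * poly f x"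
  by (simp add: pbracket_def)

lemma pbracket_minus_left: "pbracket j (- f) k g = - pbracket j f k g"
  by (simp add: pbracket_def)

lemma pbracket_minus_right: "pbracket j f k (- g) = - pbracket j f k g"
  by (simp add: pbracket_def)

lemma pbracket_degree: "pbracket 0 (cvar 0) k f = smult (of_int k) f"
  by (rule poly_ext) (simp add: pbracket_def field_simps)

lemma pbracket_0_0: "pbracket 0 f 0 g = 0"
  by (simp add: pbracket_def)

lemma pbracket_cvar_cvar: "pbracket j (cvar j) k (cvar k) = smult (of_int (k - j)) (cvar (j + k))"
  by (rule poly_ext) (simp add: pbracket_def field_simps)

lemma pbracket_cube_cvar:
  "pbracket j (cvar j ^ 3) k (cvar k) =
     smult (of_int (3 * k - j)) (cvar (j + k) ^ 3) + smult (of_int (k ^ 3 - 3 * j * k ^ 2) / 4) (cvar (j + k))"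
  by (rule poly_ext) (simp add: pbracket_def field_simps power3_eq_cube power2_eq_square)

lemma sum_shifted_squares:
  "(\<Sum>j\<in>{- int n..-1}. (of_int j + c) ^ 2) =
     of_nat n * c ^ 2 - c * of_nat n * (of_nat n + 1) + of_nat n * (of_nat n + 1) * (2 * of_nat n + 1) / (6 :: complex)"
proof (induction n)
  case (Suc n)
  have "{- int (Suc n)..-1} = insert (- int (Suc n)) {- int n..-1}"
    by auto
  then show ?case
    using Suc by (simp add: field_simps power2_eq_square)
qed simp

lemma psi1_cvar: "psi1 m (cvar m) (cvar (- m)) = (of_int m ^ 3 - of_int m) / 12"
proof (cases "0 \<le> m")
  case True
  define n where "n = nat m"
  have m: "m = int n"
    using True by (simp add: n_def)
  have "psi1 m (cvar m) (cvar (- m)) = (\<Sum>j\<in>{- int n..-1}. (of_int j + (of_nat n + 1) / 2) ^ 2)"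
    unfolding psi1_def m by (simp add: field_simps power2_eq_square)
  also have "\<dots> = (of_int m ^ 3 - of_int m) / 12"
    unfolding sum_shifted_squares m by (simp add: field_simps power2_eq_square power3_eq_cube)
  finally show ?thesis .
next
  case False
  define n where "n = nat (- m)"
  have m: "m = - int n"
    using False by (simp add: n_def)
  have "psi1 m (cvar m) (cvar (- m)) = - (\<Sum>j\<in>{- int n..-1}. (of_int j + (of_nat n + 1) / 2) ^ 2)"
    unfolding psi1_def m using False m by (simp add: field_simps power2_eq_square)
  also have "\<dots> = (of_int m ^ 3 - of_int m) / 12"
    unfolding sum_shifted_squares m by (simp add: field_simps power2_eq_square power3_eq_cube)
  finally show ?thesis .
qed

lemma psi1_minus_minus: "psi1 m (- f) (- g) = psi1 m f g"
  by (simp add: psi1_def)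

lemma psi_hom_0 [simp]: "psi_hom 0 f k g = 0"
  by (simp add: psi_hom_def psi1_def)

lemma psi1_vanishing:
  assumes "0 \<le> p" and "\<And>j. 0 \<le> j \<Longrightarrow> j < p \<Longrightarrow> poly f (of_int j) = 0"
  shows "psi1 p g f = 0"
proof -
  have "poly f (of_int j + of_int p) = 0" if "j \<in> {- p..-1}" for j
    using assms(2)[of "j + p"] that by simp
  then show ?thesis
    using assms(1) unfolding psi1_def by (auto intro!: sum.neutral)
qed

text \<open>Bracketing with \<open>t\<^sup>0 D'\<^sup>3\<close> multiplies the degree-\<open>k\<close> symbol by \<open>cube_factor k\<close>, a
  \<open>\<sigma>\<close>-even quadratic for \<open>k \<noteq> 0\<close>. Division by it shows that \<open>D\<^sup>+\<close> is generated as a Lie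
  algebra by the modes of \<open>D'\<close> and \<open>D'\<^sup>3\<close>.\<close>

definition cube_factor :: "int \<Rightarrow> complex poly" where
  "cube_factor k = [:of_int k ^ 3 + 3/2 * of_int k ^ 2 + 3/4 * of_int k,
                     3 * of_int k ^ 2 + 3 * of_int k, 3 * of_int k:]"

lemma pbracket_cube_0: "pbracket 0 (cvar 0 ^ 3) k h = cube_factor k * h"
  by (rule poly_ext) (simp add: pbracket_def cube_factor_def field_simps power3_eq_cube power2_eq_square)

lemma degree_cube_factor: "k \<noteq> 0 \<Longrightarrow> degree (cube_factor k) = 2"
  by (simp add: cube_factor_def)

lemma preflect_cube_factor: "preflect k (cube_factor k) = cube_factor k"
  by (rule poly_ext) (simp add: cube_factor_def field_simps power3_eq_cube power2_eq_square)

lemma preflect_mult: "preflect k (p * q) = preflect k p * preflect k q"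
  by (rule poly_ext) simp

lemma preflect_add: "preflect k (p + q) = preflect k p + preflect k q"
  by (rule poly_ext) simp

lemma degree_preflect: "degree (preflect k p) = degree p"
  by (simp add: preflect_def degree_pcompose)

lemma sigma_odd_division:
  assumes k: "k \<noteq> 0" and f: "sigma_odd k f"
  shows "\<exists>h z. f = cube_factor k * h + smult z (cvar k) \<and> sigma_odd k h \<and> (h = 0 \<or> degree h < degree f)"
proof -
  define q where "q = cube_factor k"
  define h where "h = f div q"
  define r where "r = f mod q"
  have q_nz: "q \<noteq> 0" and deg_q: "degree q = 2"
    using degree_cube_factor[OF k] by (auto simp: q_def)
  have f_eq: "f = q * h + r"
    by (simp add: h_def r_def)
  have deg_r: "degree r \<le> 1"
    using degree_mod_less[OF q_nz, of f] deg_q by (cases "r = 0") (auto simp: r_def)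
  have "q * preflect k h + preflect k r = - (q * h + r)"
    using f f_eq by (metis sigma_odd_iff_preflect preflect_add preflect_mult preflect_cube_factor q_def)
  then have eq: "q * (h + preflect k h) = - (r + preflect k r)"
    by (simp add: algebra_simps)
  have "degree (- (r + preflect k r)) \<le> 1"
    using degree_add_le[of r 1 "preflect k r"] deg_r by (simp only: degree_minus degree_preflect)
  then have "h + preflect k h = 0"
    using arg_cong[OF eq, of degree] degree_mult_eq[OF q_nz, of "h + preflect k h"] deg_q
    by (cases "h + preflect k h = 0") simp_all
  then have "r + preflect k r = 0"
    using eq by (metis mult_zero_right neg_equal_0_iff_equal)
  then have odd_h: "sigma_odd k h" and odd_r: "sigma_odd k r"
    using \<open>h + preflect k h = 0\<close>
    by (simp_all add: sigma_odd_iff_preflect eq_neg_iff_add_eq_0 add.commute)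
  have "h = 0 \<or> degree h < degree f"
  proof (cases "h = 0")
    case False
    have "degree (q * h) = 2 + degree h"
      using degree_mult_eq[OF q_nz False] deg_q by simp
    moreover have "degree f = degree (q * h)"
      unfolding f_eq using deg_r calculation by (intro degree_add_eq_left) simp
    ultimately show ?thesis by simp
  qed simp
  then show ?thesis
    using f_eq odd_h sigma_odd_linear[OF odd_r deg_r] q_def by metis
qed

section \<open>Homogeneous elements of \<open>D\<^sup>+\<close>\<close>

lemma dsupp_dhom: "dsupp (dhom k f) = (if f = 0 then {} else {k})"
  by (auto simp: dsupp_def dhom_def)

lemma dhom_0 [simp]: "dhom k 0 = (\<lambda>_. 0)"
  by (auto simp: dhom_def)

lemma Dplus_iff: "a \<in> Dplus \<longleftrightarrow> finite (dsupp a) \<and> (\<forall>k. sigma_odd k (a k))"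
proof -
  have "dsigma a = (\<lambda>k. preflect k (a k))"
    by (simp add: dsigma_def preflect_def)
  then show ?thesis
    by (auto simp: Dplus_def sigma_odd_iff_preflect fun_eq_iff)
qed

lemma dhom_in_Dplus [simp]: "dhom k f \<in> Dplus \<longleftrightarrow> sigma_odd k f"
  by (simp add: Dplus_iff dsupp_dhom) (auto simp: dhom_def)

lemma Dplus_sigma_odd: "a \<in> Dplus \<Longrightarrow> sigma_odd k (a k)"
  by (simp add: Dplus_iff)

lemma dbracket_dhom: "dbracket (dhom j f) (dhom k g) = dhom (j + k) (pbracket j f k g)"
proof
  fix m
  show "dbracket (dhom j f) (dhom k g) m = dhom (j + k) (pbracket j f k g) m"
  proof (cases "f = 0")
    case False
    then have "dbracket (dhom j f) (dhom k g) m =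
        pshift f (m - j) * dhom k g (m - j) - pshift (dhom k g (m - j)) j * f"
      by (simp add: dbracket_def dsupp_dhom) (simp add: dhom_def)
    then show ?thesis
      by (auto simp: dhom_def pbracket_def)
  qed (simp add: dbracket_def dsupp_dhom dhom_def)
qed

lemma Psi_dhom: "Psi (dhom j f) (dhom k g) = psi_hom j f k g"
proof (cases "f = 0")
  case False
  then have "Psi (dhom j f) (dhom k g) = psi1 j f (dhom k g (- j))"
    by (simp add: Psi_def dsupp_dhom) (simp add: dhom_def)
  then show ?thesis
    by (auto simp: psi_hom_def dhom_def psi1_def)
qed (simp add: Psi_def dsupp_def psi_hom_def psi1_def)

lemma dhom_lincomb:
  "(\<lambda>i. dscale z (dhom k f) i + dscale w (dhom k g) i) = dhom k (smult z f + smult w g)"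
  by (auto simp: dscale_def dhom_def)

lemma Wmode_1: "Wmode 1 k = dhom k (- cvar k)"
proof -
  have "ffact_poly 1 = [:0, 1:]"
    by (simp add: ffact_poly_def)
  then show ?thesis
    unfolding Wmode_def dhom_def by (auto intro!: poly_ext simp: poly_pcompose field_simps)
qed

text \<open>The anti-involution \<open>t\<^sup>k f(D) \<mapsto> t\<^sup>-\<^sup>k f(D - k)\<close> of \<open>D\<^sup>+\<close>: it reverses brackets and
  preserves the cocycle, hence defines the contragredient of a module.\<close>

definition dtheta :: "dop \<Rightarrow> dop" where
  "dtheta a = (\<lambda>k. pshift (a (- k)) k)"

lemma dtheta_dhom: "dtheta (dhom j f) = dhom (- j) (pshift f (- j))"
  by (auto simp: dtheta_def dhom_def)

lemma dtheta_dtheta [simp]: "dtheta (dtheta a) = a"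
  by (auto simp: dtheta_def pshift_pshift)

lemma sigma_odd_dtheta:
  assumes "sigma_odd j f"
  shows "sigma_odd (- j) (pshift f (- j))"
  unfolding sigma_odd_def
proof
  fix x
  show "poly (pshift f (- j)) (- x - of_int (- j) - 1) = - poly (pshift f (- j)) x"
    by (simp, rule sigma_oddD[OF assms]) simp
qed

lemma Dplus_dtheta: "a \<in> Dplus \<Longrightarrow> dtheta a \<in> Dplus"
proof -
  assume a: "a \<in> Dplus"
  have "dsupp (dtheta a) = uminus ` dsupp a"
    by (force simp: dsupp_def dtheta_def image_iff)
  moreover have "sigma_odd k (dtheta a k)" for k
    using sigma_odd_dtheta[OF Dplus_sigma_odd[OF a, of "- k"]] by (simp add: dtheta_def)
  ultimately show ?thesis
    using a by (simp add: Dplus_iff)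
qed

lemma dtheta_lincomb:
  "dtheta (\<lambda>k. dscale z a k + dscale w b k) = (\<lambda>k. dscale z (dtheta a) k + dscale w (dtheta b) k)"
  by (auto simp: dtheta_def dscale_def intro!: poly_ext)

lemma pbracket_dtheta:
  "pbracket (- k) (pshift g (- k)) (- j) (pshift f (- j)) = pshift (pbracket j f k g) (- (j + k))"
  by (rule poly_ext) (simp add: pbracket_def algebra_simps)

lemma psi_hom_dtheta: "psi_hom (- k) (pshift g (- k)) (- j) (pshift f (- j)) = psi_hom j f k g"
proof (cases "j + k = 0")
  case True
  then have "k = - j"
    by simp
  then show ?thesis
    unfolding psi_hom_def psi1_def by (cases "0 \<le> j") (simp_all add: mult.commute)
qed (simp add: psi_hom_def)

lemma dtheta_Wmode_1: "dtheta (Wmode 1 k) = Wmode 1 (- k)"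
proof -
  have "pshift (- cvar k) (- k) = - cvar (- k)"
    by (rule poly_ext) (simp add: field_simps)
  then show ?thesis
    unfolding Wmode_1 dtheta_dhom by simp
qed

section \<open>Modules over \<open>D\<^sup>+\<close>\<close>

text \<open>\<open>deg_op = -W\<^sup>1\<^sub>0\<close>, so its eigenvalue on a vector is minus the conformal weight.\<close>

abbreviation deg_op :: dop where
  "deg_op \<equiv> dhom 0 (cvar 0)"

text \<open>\<open>K\<close> is the set on which \<open>\<rho>\<close> is a representation: all of \<open>V\<close> for \<open>V\<close> itself, the linear
  functionals inside the space of all functions for its contragredient module.\<close>

locale Dplus_module = vector_space sc for sc :: "complex \<Rightarrow> 'w::ab_group_add \<Rightarrow> 'w" +
  fixes c :: complex and \<rho> :: "dop \<Rightarrow> 'w \<Rightarrow> 'w" and K :: "'w set"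
  assumes K_zero: "0 \<in> K"
    and K_add: "x \<in> K \<Longrightarrow> y \<in> K \<Longrightarrow> x + y \<in> K"
    and K_scale: "x \<in> K \<Longrightarrow> sc z x \<in> K"
    and rho_K: "a \<in> Dplus \<Longrightarrow> x \<in> K \<Longrightarrow> \<rho> a x \<in> K"
    and rho_add: "a \<in> Dplus \<Longrightarrow> \<rho> a (x + y) = \<rho> a x + \<rho> a y"
    and rho_scale: "a \<in> Dplus \<Longrightarrow> \<rho> a (sc z x) = sc z (\<rho> a x)"
    and rho_lincomb: "a \<in> Dplus \<Longrightarrow> b \<in> Dplus \<Longrightarrow> x \<in> K \<Longrightarrow>
      \<rho> (\<lambda>k. dscale z a k + dscale w b k) x = sc z (\<rho> a x) + sc w (\<rho> b x)"
    and rho_commutator: "sigma_odd j f \<Longrightarrow> sigma_odd k g \<Longrightarrow> x \<in> K \<Longrightarrow>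
      \<rho> (dhom j f) (\<rho> (dhom k g) x) =
        \<rho> (dhom k g) (\<rho> (dhom j f) x) + \<rho> (dhom (j + k) (pbracket j f k g)) x
        + sc (c * psi_hom j f k g) x"
begin

lemma K_diff: "x \<in> K \<Longrightarrow> y \<in> K \<Longrightarrow> x - y \<in> K"
  using K_add[OF _ K_scale[of y "-1"], of x] by simp

lemma rho_0: "a \<in> Dplus \<Longrightarrow> \<rho> a 0 = 0"
  using rho_scale[of a 0 0] by simp

lemma rho_diff: "a \<in> Dplus \<Longrightarrow> \<rho> a (x - y) = \<rho> a x - \<rho> a y"
  using rho_add[of a x "- y"] rho_scale[of a "-1" y] by simp

lemma rho_dhom_lincomb:
  "sigma_odd k f \<Longrightarrow> sigma_odd k g \<Longrightarrow> x \<in> K \<Longrightarrow>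
    \<rho> (dhom k (smult z f + smult w g)) x = sc z (\<rho> (dhom k f) x) + sc w (\<rho> (dhom k g) x)"
  using rho_lincomb[of "dhom k f" "dhom k g" x z w] by (simp add: dhom_lincomb)

lemma rho_zero_op: "x \<in> K \<Longrightarrow> \<rho> (\<lambda>_. 0) x = 0"
  using rho_dhom_lincomb[of 0 0 0 x 0 0] by simp

lemma rho_dhom_smult: "sigma_odd k f \<Longrightarrow> x \<in> K \<Longrightarrow> \<rho> (dhom k (smult z f)) x = sc z (\<rho> (dhom k f) x)"
  using rho_dhom_lincomb[of k f 0 x z 0] by simp

lemma rho_dhom_add:
  "sigma_odd k f \<Longrightarrow> sigma_odd k g \<Longrightarrow> x \<in> K \<Longrightarrow> \<rho> (dhom k (f + g)) x = \<rho> (dhom k f) x + \<rho> (dhom k g) x"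
  using rho_dhom_lincomb[of k f g x 1 1] by simp

lemma rho_dhom_diff:
  "sigma_odd k f \<Longrightarrow> sigma_odd k g \<Longrightarrow> x \<in> K \<Longrightarrow> \<rho> (dhom k (f - g)) x = \<rho> (dhom k f) x - \<rho> (dhom k g) x"
  using rho_dhom_lincomb[of k f g x 1 "-1"] by simp

lemma rho_dhom_minus: "sigma_odd k f \<Longrightarrow> x \<in> K \<Longrightarrow> \<rho> (dhom k (- f)) x = - \<rho> (dhom k f) x"
  using rho_dhom_smult[of k f x "-1"] by simp

lemma rho_span:
  assumes a: "a \<in> Dplus" and S: "\<And>x. x \<in> S \<Longrightarrow> \<rho> a x \<in> span T" and y: "y \<in> span S"
  shows "\<rho> a y \<in> span T"
  using y
proof (induction rule: span_induct_alt)
  case base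
  then show ?case
    using rho_0[OF a] span_zero by simp
next
  case (step z x y)
  then show ?case
    using S rho_add[OF a] rho_scale[OF a] by (simp add: span_add span_scale)
qed

lemma rho_Wmode_1: "x \<in> K \<Longrightarrow> \<rho> (Wmode 1 k) x = - \<rho> (dhom k (cvar k)) x"
  unfolding Wmode_1 by (rule rho_dhom_minus[OF sigma_odd_cvar])

lemma Wmode_1_commutator:
  assumes x: "x \<in> K"
  shows "\<rho> (Wmode 1 m) (\<rho> (Wmode 1 n) x) - \<rho> (Wmode 1 n) (\<rho> (Wmode 1 m) x) =
    sc (of_int (m - n)) (\<rho> (Wmode 1 (m + n)) x) + (if m = - n then sc (of_int (m ^ 3 - m) / 12 * c) x else 0)"
proof -
  have bracket: "pbracket m (- cvar m) n (- cvar n) = smult (of_int (m - n)) (- cvar (m + n))"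
    unfolding pbracket_minus_left pbracket_minus_right pbracket_cvar_cvar by (rule poly_ext) (simp add: field_simps)
  have "psi_hom m (- cvar m) n (- cvar n) = (if m = - n then (of_int m ^ 3 - of_int m) / 12 else 0)"
  proof (cases "m = - n")
    case True
    then have "n = - m"
      by simp
    then show ?thesis
      using psi1_cvar[of m] by (simp add: psi_hom_def psi1_minus_minus)
  qed (simp add: psi_hom_def)
  then have "sc (c * psi_hom m (- cvar m) n (- cvar n)) x =
      (if m = - n then sc (of_int (m ^ 3 - m) / 12 * c) x else 0)"
    by (simp add: field_simps)
  moreover have "\<rho> (dhom (m + n) (pbracket m (- cvar m) n (- cvar n))) x = sc (of_int (m - n)) (\<rho> (Wmode 1 (m + n)) x)"
    unfolding bracket Wmode_1 by (rule rho_dhom_smult[OF sigma_odd_minus[OF sigma_odd_cvar] x])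
  ultimately show ?thesis
    using rho_commutator[OF sigma_odd_minus[OF sigma_odd_cvar] sigma_odd_minus[OF sigma_odd_cvar] x, of m n]
    unfolding Wmode_1 by (simp add: algebra_simps)
qed

lemma deg_op_shift:
  assumes x: "x \<in> K" and "\<rho> deg_op x = sc \<mu> x" and f: "sigma_odd k f"
  shows "\<rho> deg_op (\<rho> (dhom k f) x) = sc (\<mu> + of_int k) (\<rho> (dhom k f) x)"
proof -
  have "\<rho> deg_op (\<rho> (dhom k f) x) =
      \<rho> (dhom k f) (\<rho> deg_op x) + \<rho> (dhom (0 + k) (pbracket 0 (cvar 0) k f)) x"
    using rho_commutator[OF sigma_odd_cvar f x] by simp
  also have "\<dots> = sc \<mu> (\<rho> (dhom k f) x) + sc (of_int k) (\<rho> (dhom k f) x)"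
    using assms by (simp add: pbracket_degree rho_scale rho_dhom_smult)
  finally show ?thesis
    by (simp add: scale_left_distrib)
qed

definition weight_space :: "nat \<Rightarrow> 'w set" where
  "weight_space n = {x. \<rho> deg_op x = sc (- of_nat n) x}"

lemma weight_space_lowering:
  assumes x: "x \<in> K" "x \<in> weight_space n" and k: "k \<le> 0" and f: "sigma_odd k f"
  shows "\<rho> (dhom k f) x \<in> weight_space (n + nat (- k))"
proof -
  have "\<rho> deg_op (\<rho> (dhom k f) x) = sc (- of_nat n + of_int k) (\<rho> (dhom k f) x)"
    using deg_op_shift[of x "- of_nat n" k f] x f by (simp add: weight_space_def)
  moreover have "- of_nat (n + nat (- k)) = (- of_nat n + of_int k :: complex)"
    using k by simp
  ultimately show ?thesis
    unfolding weight_space_def by (simp only: mem_Collect_eq)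
qed

lemma rho_mem_by_components:
  assumes a: "a \<in> Dplus" and x: "x \<in> K"
    and S_zero: "0 \<in> S" and S_add: "\<And>y z. y \<in> S \<Longrightarrow> z \<in> S \<Longrightarrow> y + z \<in> S"
    and components: "\<And>k. \<rho> (dhom k (a k)) x \<in> S"
  shows "\<rho> a x \<in> S"
proof -
  have "\<rho> a x \<in> S" if "finite F" "a \<in> Dplus" "dsupp a \<subseteq> F" "\<And>k. \<rho> (dhom k (a k)) x \<in> S" for a F
    using that
  proof (induction F arbitrary: a rule: finite_induct)
    case empty
    then have "a = (\<lambda>_. 0)"
      by (auto simp: dsupp_def)
    then show ?case
      using rho_zero_op[OF x] S_zero by simp
  next
    case (insert k F)
    define a' where "a' = a(k := 0)"
    have "dsupp a' \<subseteq> dsupp a"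
      by (auto simp: a'_def dsupp_def)
    then have a': "a' \<in> Dplus"
      using insert.prems(1) finite_subset by (auto simp: Dplus_iff a'_def)
    have "\<rho> a' x \<in> S"
    proof (rule insert.IH[OF a'])
      show "dsupp a' \<subseteq> F"
        using insert.prems(2) insert.hyps(2) by (auto simp: a'_def dsupp_def)
      show "\<rho> (dhom j (a' j)) x \<in> S" for j
        using insert.prems(3)[of j] rho_zero_op[OF x] S_zero by (simp add: a'_def)
    qed
    moreover have "a = (\<lambda>j. dscale 1 a' j + dscale 1 (dhom k (a k)) j)"
      by (auto simp: a'_def dscale_def dhom_def)
    then have "\<rho> a x = \<rho> a' x + \<rho> (dhom k (a k)) x"
      using rho_lincomb[OF a' _ x, of "dhom k (a k)" 1 1] Dplus_sigma_odd[OF insert.prems(1)] by simp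
    ultimately show ?case
      using insert.prems(3) S_add by simp
  qed
  then show ?thesis
    using a components by (auto simp: Dplus_iff)
qed

definition singular :: "'w \<Rightarrow> bool" where
  "singular u \<longleftrightarrow> (\<forall>p g. 0 < p \<longrightarrow> sigma_odd p g \<longrightarrow> \<rho> (dhom p g) u = 0)"

end

text \<open>\<open>v\<close> is a highest weight vector of weight zero; the last assumption, that there are no
  singular vectors of positive conformal weight, is what irreducibility provides.\<close>

locale Dplus_hw_module = Dplus_module +
  fixes v
  assumes v_in_K: "v \<in> K"
    and hw_annihilated: "0 \<le> k \<Longrightarrow> sigma_odd k f \<Longrightarrow> \<rho> (dhom k f) v = 0"
    and singular_eq_0: "u \<in> K \<Longrightarrow> 0 < N \<Longrightarrow> u \<in> weight_space N \<Longrightarrow> singular u \<Longrightarrow> u = 0"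
begin

lemma deg_op_v: "\<rho> deg_op v = sc 0 v"
  using hw_annihilated[OF _ sigma_odd_cvar, of 0] by simp

lemma commutator_v:
  "0 \<le> p \<Longrightarrow> sigma_odd p g \<Longrightarrow> sigma_odd k f \<Longrightarrow>
    \<rho> (dhom p g) (\<rho> (dhom k f) v) = \<rho> (dhom (p + k) (pbracket p g k f)) v + sc (c * psi_hom p g k f) v"
  using rho_commutator[of p g k f v] v_in_K hw_annihilated[of p g] rho_0[of "dhom k f"] by simp

text \<open>By induction on \<open>N\<close>: the vector \<open>\<rho> (dhom (- N) f) v\<close> is singular of conformal weight \<open>N\<close>.\<close>

lemma neg_mode_annihilates:
  "sigma_odd (- int N) f \<Longrightarrow> (\<And>j. 0 \<le> j \<Longrightarrow> j < int N \<Longrightarrow> poly f (of_int j) = 0) \<Longrightarrow>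
    \<rho> (dhom (- int N) f) v = 0"
proof (induction N arbitrary: f rule: less_induct)
  case (less N)
  show ?case
  proof (cases "N = 0")
    case True
    then show ?thesis
      using hw_annihilated less.prems by simp
  next
    case False
    let ?u = "\<rho> (dhom (- int N) f) v"
    have "singular ?u"
      unfolding singular_def
    proof (intro allI impI)
      fix p g assume p: "0 < p" and g: "sigma_odd p g"
      have bracket_odd: "sigma_odd (p - int N) (pbracket p g (- int N) f)"
        using sigma_odd_pbracket[OF g less.prems(1)] by simp
      have "\<rho> (dhom (p - int N) (pbracket p g (- int N) f)) v = 0"
      proof (cases "int N \<le> p")
        case True
        then show ?thesis
          using hw_annihilated bracket_odd by simp
      next
        case False
        define M where "M = nat (int N - p)"
        have M: "M < N" "p - int N = - int M"
          using p False by (auto simp: M_def)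
        have "poly (pbracket p g (- int N) f) (of_int j) = 0" if "0 \<le> j" "j < int M" for j
          using less.prems(2)[of j] less.prems(2)[of "j + p"] that M p by (simp add: add.commute)
        then show ?thesis
          using less.IH[OF M(1)] bracket_odd M(2) by simp
      qed
      moreover have "psi_hom p g (- int N) f = 0"
      proof (cases "p = int N")
        case True
        then show ?thesis
          using psi1_vanishing[of "int N" f g] less.prems(2) by (simp add: psi_hom_def)
      qed (simp add: psi_hom_def)
      ultimately show "\<rho> (dhom p g) ?u = 0"
        using commutator_v[of p g "- int N" f] p g less.prems(1) by simp
    qed
    moreover have "?u \<in> weight_space N"
      using weight_space_lowering[OF v_in_K, of 0 "- int N" f] less.prems(1) deg_op_v
      by (simp add: weight_space_def)
    ultimately show ?thesis
      using singular_eq_0[of ?u N] rho_K v_in_K less.prems(1) False by simp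
  qed
qed

lemma low_mode_annihilates:
  assumes N: "N \<le> 3" and f: "sigma_odd (- int N) f" and f0: "poly f (of_nat N - 1) = 0"
  shows "\<rho> (dhom (- int N) f) v = 0"
proof (rule neg_mode_annihilates[OF f])
  fix j :: int assume j: "0 \<le> j" "j < int N"
  have refl: "poly f (of_int (int N - 1 - j)) = - poly f (of_int j)"
    by (rule sigma_oddD[OF f]) simp
  have f0': "poly f (of_int (int N - 1)) = 0"
    using f0 by simp
  consider "j = int N - 1" | "int N - 1 - j = int N - 1" | "int N - 1 - j = j"
    using N j by linarith
  then show "poly f (of_int j) = 0"
  proof cases
    case 1
    then show ?thesis using f0' by simp
  next
    case 2
    then show ?thesis using refl f0' by simp
  next
    case 3
    then show ?thesis using refl[unfolded 3] by simp
  qed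
qed

lemma minus1_mode_v: "sigma_odd (-1) f \<Longrightarrow> \<rho> (dhom (-1) f) v = 0"
  using low_mode_annihilates[of 1 f] sigma_oddD[of "-1" f 0 0] by simp

lemma minus2_mode_v:
  assumes f: "sigma_odd (-2) f"
  shows "\<rho> (dhom (-2) f) v = sc (2 * poly f 1) (\<rho> (dhom (-2) (cvar (-2))) v)"
proof -
  define f' where "f' = f - smult (2 * poly f 1) (cvar (-2))"
  have f': "sigma_odd (-2) f'"
    unfolding f'_def by (intro sigma_odd_diff sigma_odd_smult f sigma_odd_cvar)
  have "\<rho> (dhom (-2) f') v = 0"
    using low_mode_annihilates[of 2 f'] f' by (simp add: f'_def)
  then show ?thesis
    using rho_dhom_diff[OF f sigma_odd_smult[OF sigma_odd_cvar] v_in_K] rho_dhom_smult[OF sigma_odd_cvar v_in_K]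
    by (simp add: f'_def)
qed

lemma minus3_mode_v:
  assumes f: "sigma_odd (-3) f"
  shows "\<rho> (dhom (-3) f) v = sc (poly f 2) (\<rho> (dhom (-3) (cvar (-3))) v)"
proof -
  define f' where "f' = f - smult (poly f 2) (cvar (-3))"
  have f': "sigma_odd (-3) f'"
    unfolding f'_def by (intro sigma_odd_diff sigma_odd_smult f sigma_odd_cvar)
  have "\<rho> (dhom (-3) f') v = 0"
    using low_mode_annihilates[of 3 f'] f' by (simp add: f'_def)
  then show ?thesis
    using rho_dhom_diff[OF f sigma_odd_smult[OF sigma_odd_cvar] v_in_K] rho_dhom_smult[OF sigma_odd_cvar v_in_K]
    by (simp add: f'_def)
qed


inductive_set vir_span where
  vir_span_v: "v \<in> vir_span"
| vir_span_mode: "x \<in> vir_span \<Longrightarrow> \<rho> (Wmode 1 k) x \<in> vir_span"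
| vir_span_add: "x \<in> vir_span \<Longrightarrow> y \<in> vir_span \<Longrightarrow> x + y \<in> vir_span"
| vir_span_scale: "x \<in> vir_span \<Longrightarrow> sc z x \<in> vir_span"

lemma vir_span_K: "x \<in> vir_span \<Longrightarrow> x \<in> K"
proof (induction rule: vir_span.induct)
  case (vir_span_mode x k)
  then show ?case
    unfolding Wmode_1 by (intro rho_K) (simp_all add: sigma_odd_minus sigma_odd_cvar)
qed (auto simp: v_in_K intro: K_add K_scale)

lemma vir_span_0: "0 \<in> vir_span"
  using vir_span_scale[OF vir_span_v, of 0] by simp

lemma vir_span_diff: "x \<in> vir_span \<Longrightarrow> y \<in> vir_span \<Longrightarrow> x - y \<in> vir_span"
  using vir_span_add[OF _ vir_span_scale[of y "-1"], of x] by simp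

lemma vir_span_cvar:
  assumes "x \<in> vir_span"
  shows "\<rho> (dhom k (cvar k)) x \<in> vir_span"
proof -
  have "sc (-1) (\<rho> (Wmode 1 k) x) \<in> vir_span"
    using assms by (intro vir_span_scale vir_span_mode)
  then show ?thesis
    unfolding rho_Wmode_1[OF vir_span_K[OF assms]] by simp
qed

lemma vir_span_minimal:
  assumes "subspace S" and "v \<in> S" and "\<And>k x. x \<in> S \<Longrightarrow> \<rho> (Wmode 1 k) x \<in> S"
  shows "vir_span \<subseteq> S"
proof
  fix x assume "x \<in> vir_span"
  then show "x \<in> S"
    by induction (use assms in \<open>auto simp: subspace_add subspace_scale\<close>)
qed

end

subsection \<open>A singular vector at central charge \<open>1/2\<close>\<close>

text \<open>The coefficients \<open>6/7\<close> and \<open>43/28\<close> are the ones for which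
  \<open>(t\<^sup>-\<^sup>4 D'\<^sup>3 + 6/7 (t\<^sup>-\<^sup>2 D')\<^sup>2 - 43/28 t\<^sup>-\<^sup>4 D') v\<close> is singular when \<open>c = 1/2\<close>.\<close>

definition cube_defect :: "int \<Rightarrow> complex poly \<Rightarrow> complex poly" where
  "cube_defect p g =
     pbracket p g (-4) (cvar (-4) ^ 3)
     + smult (6/7) (pbracket (p - 2) (pbracket p g (-2) (cvar (-2))) (-2) (cvar (-2)))
     - smult (43/28) (pbracket p g (-4) (cvar (-4)))"

definition cube_defect_scalar :: "int \<Rightarrow> complex poly \<Rightarrow> complex" where
  "cube_defect_scalar p g =
     psi_hom p g (-4) (cvar (-4) ^ 3)
     + 6/7 * psi_hom (p - 2) (pbracket p g (-2) (cvar (-2))) (-2) (cvar (-2))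
     - 43/28 * psi_hom p g (-4) (cvar (-4))"

lemma sigma_odd_cube_defect:
  assumes g: "sigma_odd p g"
  shows "sigma_odd (p - 4) (cube_defect p g)"
proof -
  have "sigma_odd (p - 2) (pbracket p g (-2) (cvar (-2)))"
    using sigma_odd_pbracket[OF g sigma_odd_cvar, of "-2"] by simp
  then have "sigma_odd (p - 4) (pbracket (p - 2) (pbracket p g (-2) (cvar (-2))) (-2) (cvar (-2)))"
    using sigma_odd_pbracket[OF _ sigma_odd_cvar, of "p - 2" _ "-2"] by simp
  moreover have "sigma_odd (p - 4) (pbracket p g (-4) (cvar (-4) ^ 3))"
    "sigma_odd (p - 4) (pbracket p g (-4) (cvar (-4)))"
    using sigma_odd_pbracket[OF g sigma_odd_cvar_cube, of "-4"] sigma_odd_pbracket[OF g sigma_odd_cvar, of "-4"]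
    by simp_all
  ultimately show ?thesis
    unfolding cube_defect_def by (intro sigma_odd_add sigma_odd_diff sigma_odd_smult)
qed

lemma cube_defect_1:
  assumes "sigma_odd 1 g"
  shows "poly (cube_defect 1 g) 2 = 0"
proof -
  have "poly g (-2) = - poly g 0"
    by (rule sigma_oddD[OF assms]) simp
  then show ?thesis
    by (simp add: cube_defect_def field_simps power3_eq_cube)
qed

lemma cube_defect_2:
  assumes "sigma_odd 2 g"
  shows "2 * poly (cube_defect 2 g) 1 + 6/7 * psi_hom 2 g (-2) (cvar (-2)) = 0"
proof -
  have "poly g (-2) = - poly g (-1)"
    by (rule sigma_oddD[OF assms]) simp
  moreover have "{-2..-1 :: int} = {-2, -1}"
    by auto
  ultimately show ?thesis
    by (simp add: cube_defect_def psi_hom_def psi1_def field_simps power3_eq_cube)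
qed

lemma cube_defect_scalar_4: "cube_defect_scalar 4 g = 0"
proof -
  have "{-2..-1 :: int} = {-2, -1}" and "{-4..-1 :: int} = {-4, -3, -2, -1}"
    by auto
  then show ?thesis
    by (simp add: cube_defect_scalar_def psi_hom_def psi1_def field_simps power3_eq_cube)
qed

lemma cube_defect_scalar_eq_0: "p \<noteq> 4 \<Longrightarrow> cube_defect_scalar p g = 0"
  by (cases "p = 2") (simp_all add: cube_defect_scalar_def psi_hom_def)

context Dplus_hw_module
begin

lemma positive_mode_L2_squared:
  assumes p: "0 < p" and g: "sigma_odd p g"
  defines "e \<equiv> dhom (-2) (cvar (-2))" and "b \<equiv> pbracket p g (-2) (cvar (-2))"
  shows "\<rho> (dhom p g) (\<rho> e (\<rho> e v)) =
    sc (2 * c * psi_hom p g (-2) (cvar (-2))) (\<rho> e v)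
    + \<rho> (dhom (p - 4) (pbracket (p - 2) b (-2) (cvar (-2)))) v
    + sc (c * psi_hom (p - 2) b (-2) (cvar (-2))) v"
proof -
  have b: "sigma_odd (p - 2) b"
    unfolding b_def using sigma_odd_pbracket[OF g sigma_odd_cvar, of "-2"] by simp
  have e: "e \<in> Dplus"
    by (simp add: e_def sigma_odd_cvar)
  have ev: "\<rho> e v \<in> K"
    using rho_K[OF e v_in_K] .
  have b_v: "\<rho> (dhom (p - 2) b) v = 0"
  proof (cases "2 \<le> p")
    case False
    then have "p - 2 = -1"
      using p by simp
    then show ?thesis
      using minus1_mode_v b by simp
  qed (use hw_annihilated b in simp)
  have "\<rho> (dhom p g) (\<rho> e v) = sc (c * psi_hom p g (-2) (cvar (-2))) v"
    using commutator_v[OF _ g sigma_odd_cvar, of "-2"] p b_v by (simp add: e_def b_def)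
  then have "\<rho> e (\<rho> (dhom p g) (\<rho> e v)) = sc (c * psi_hom p g (-2) (cvar (-2))) (\<rho> e v)"
    by (simp add: rho_scale[OF e])
  moreover have "\<rho> (dhom (p - 2) b) (\<rho> e v) =
      \<rho> (dhom (p - 4) (pbracket (p - 2) b (-2) (cvar (-2)))) v + sc (c * psi_hom (p - 2) b (-2) (cvar (-2))) v"
    using rho_commutator[OF b sigma_odd_cvar v_in_K, of "-2"] b_v rho_0[OF e] by (simp add: e_def)
  moreover have "\<rho> (dhom p g) (\<rho> e (\<rho> e v)) =
      \<rho> e (\<rho> (dhom p g) (\<rho> e v)) + \<rho> (dhom (p - 2) b) (\<rho> e v) + sc (c * psi_hom p g (-2) (cvar (-2))) (\<rho> e v)"
    using rho_commutator[OF g sigma_odd_cvar ev[unfolded e_def]] by (simp add: e_def b_def)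
  ultimately show ?thesis
    by (simp add: scale_left_distrib[symmetric] algebra_simps)
qed

definition cube_combination where
  "cube_combination =
     \<rho> (dhom (-4) (cvar (-4) ^ 3)) v + sc (6/7) (\<rho> (dhom (-2) (cvar (-2))) (\<rho> (dhom (-2) (cvar (-2))) v))
     - sc (43/28) (\<rho> (dhom (-4) (cvar (-4))) v)"

lemma positive_mode_cube_combination:
  assumes p: "0 < p" and g: "sigma_odd p g"
  shows "\<rho> (dhom p g) cube_combination =
    \<rho> (dhom (p - 4) (cube_defect p g)) v + sc (12/7 * c * psi_hom p g (-2) (cvar (-2))) (\<rho> (dhom (-2) (cvar (-2))) v)
    + sc (c * cube_defect_scalar p g) v"
proof -
  define b where "b = pbracket p g (-2) (cvar (-2))"
  have g': "dhom p g \<in> Dplus"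
    using g by simp
  have odd: "sigma_odd (p - 4) (pbracket p g (-4) (cvar (-4) ^ 3))"
    "sigma_odd (p - 4) (pbracket (p - 2) b (-2) (cvar (-2)))"
    "sigma_odd (p - 4) (pbracket p g (-4) (cvar (-4)))"
    using sigma_odd_pbracket[OF g sigma_odd_cvar_cube, of "-4"] sigma_odd_pbracket[OF g sigma_odd_cvar, of "-4"]
      sigma_odd_pbracket[OF sigma_odd_pbracket[OF g sigma_odd_cvar] sigma_odd_cvar, of "-2" "-2"]
    by (simp_all add: b_def)
  have defect: "\<rho> (dhom (p - 4) (cube_defect p g)) v =
      \<rho> (dhom (p - 4) (pbracket p g (-4) (cvar (-4) ^ 3))) v
      + sc (6/7) (\<rho> (dhom (p - 4) (pbracket (p - 2) b (-2) (cvar (-2)))) v)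
      - sc (43/28) (\<rho> (dhom (p - 4) (pbracket p g (-4) (cvar (-4)))) v)"
    unfolding cube_defect_def b_def[symmetric] using odd
    by (simp add: rho_dhom_add rho_dhom_diff rho_dhom_smult sigma_odd_add sigma_odd_smult v_in_K)
  show ?thesis
    using commutator_v[OF _ g sigma_odd_cvar_cube, of "-4"] commutator_v[OF _ g sigma_odd_cvar, of "-4"]
      positive_mode_L2_squared[OF p g] p
    unfolding defect cube_combination_def b_def cube_defect_scalar_def
    by (simp add: rho_add[OF g'] rho_diff[OF g'] rho_scale[OF g'] algebra_simps)
qed

lemma cube_combination_in_K: "cube_combination \<in> K"
  unfolding cube_combination_def using v_in_K
  by (intro K_add K_diff K_scale rho_K) (simp_all add: sigma_odd_cvar sigma_odd_cvar_cube)

lemma cube_combination_weight: "cube_combination \<in> weight_space 4"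
proof -
  define e where "e = dhom (-2) (cvar (-2))"
  have e: "e \<in> Dplus"
    by (simp add: e_def sigma_odd_cvar)
  have "\<rho> deg_op (\<rho> e v) = sc (-2) (\<rho> e v)"
    using deg_op_shift[OF v_in_K deg_op_v sigma_odd_cvar, of "-2"] by (simp add: e_def)
  then have "\<rho> deg_op (\<rho> e (\<rho> e v)) = sc (-4) (\<rho> e (\<rho> e v))"
    using deg_op_shift[OF rho_K[OF e v_in_K] _ sigma_odd_cvar, of "-2" "-2"] by (simp add: e_def)
  moreover have "\<rho> deg_op (\<rho> (dhom (-4) f) v) = sc (-4) (\<rho> (dhom (-4) f) v)" if "sigma_odd (-4) f" for f
    using deg_op_shift[OF v_in_K deg_op_v that] by simp
  ultimately show ?thesis
    unfolding cube_combination_def weight_space_def e_def[symmetric]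
    using sigma_odd_cvar[of "-4"] sigma_odd_cvar_cube[of "-4"]
    by (simp add: rho_diff rho_add rho_scale sigma_odd_cvar algebra_simps)
qed

lemma cube_combination_singular:
  assumes c: "c = 1/2"
  shows "singular cube_combination"
  unfolding singular_def
proof (intro allI impI)
  fix p g assume p: "0 < p" and g: "sigma_odd p g"
  have defect: "sigma_odd (p - 4) (cube_defect p g)"
    by (rule sigma_odd_cube_defect[OF g])
  have "cube_defect_scalar p g = 0"
    using cube_defect_scalar_4 cube_defect_scalar_eq_0 by (cases "p = 4") auto
  moreover have "\<rho> (dhom (p - 4) (cube_defect p g)) v
      + sc (6/7 * psi_hom p g (-2) (cvar (-2))) (\<rho> (dhom (-2) (cvar (-2))) v) = 0"
  proof -
    consider "p = 1" | "p = 2" | "p = 3" | "4 \<le> p"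
      using p by linarith
    then show ?thesis
    proof cases
      case 1
      then show ?thesis
        using minus3_mode_v[of "cube_defect 1 g"] cube_defect_1 g defect by (simp add: psi_hom_def)
    next
      case 2
      then show ?thesis
        using minus2_mode_v[of "cube_defect 2 g"] defect cube_defect_2 g
        by (simp add: scale_left_distrib[symmetric])
    next
      case 3
      then show ?thesis
        using minus1_mode_v[of "cube_defect 3 g"] defect by (simp add: psi_hom_def)
    next
      case 4
      then show ?thesis
        using hw_annihilated[OF _ defect] by (simp add: psi_hom_def)
    qed
  qed
  ultimately show "\<rho> (dhom p g) cube_combination = 0"
    using positive_mode_cube_combination[OF p g] c by simp
qed

lemma cube_mode_relation:
  assumes "c = 1/2"
  shows "\<rho> (dhom (-4) (cvar (-4) ^ 3)) v =
    sc (-6/7) (\<rho> (dhom (-2) (cvar (-2))) (\<rho> (dhom (-2) (cvar (-2))) v)) + sc (43/28) (\<rho> (dhom (-4) (cvar (-4))) v)"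
proof -
  have "cube_combination = 0"
    using singular_eq_0[OF cube_combination_in_K _ cube_combination_weight cube_combination_singular[OF assms]]
    by simp
  then show ?thesis
    by (simp add: cube_combination_def algebra_simps)
qed

text \<open>\<open>t\<^sup>-\<^sup>1 D'\<close> annihilates \<open>v\<close>, so commuting it with a cube mode applied to \<open>v\<close> lowers the degree.\<close>

lemma cube_mode_v_step:
  assumes k: "k \<le> -4" and k_v: "\<rho> (dhom k (cvar k ^ 3)) v \<in> vir_span"
  shows "\<rho> (dhom (k - 1) (cvar (k - 1) ^ 3)) v \<in> vir_span"
proof -
  have bracket: "pbracket (-1) (cvar (-1)) k (cvar k ^ 3) =
      smult (of_int (k + 3)) (cvar (k - 1) ^ 3) + smult ((1 + 3 * of_int k) / 4) (cvar (k - 1))"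
    by (rule poly_ext) (simp add: field_simps power3_eq_cube power2_eq_square)
  have "\<rho> (dhom (-1) (cvar (-1))) (\<rho> (dhom k (cvar k ^ 3)) v) =
      \<rho> (dhom (k - 1) (pbracket (-1) (cvar (-1)) k (cvar k ^ 3))) v"
    using rho_commutator[OF sigma_odd_cvar sigma_odd_cvar_cube v_in_K, of "-1" k]
      minus1_mode_v[OF sigma_odd_cvar] rho_0[of "dhom k (cvar k ^ 3)"] k
    by (simp add: psi_hom_def sigma_odd_cvar_cube)
  also have "\<dots> = sc (of_int (k + 3)) (\<rho> (dhom (k - 1) (cvar (k - 1) ^ 3)) v)
      + sc ((1 + 3 * of_int k) / 4) (\<rho> (dhom (k - 1) (cvar (k - 1))) v)"
    unfolding bracket by (rule rho_dhom_lincomb[OF sigma_odd_cvar_cube sigma_odd_cvar v_in_K])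
  finally have "sc (of_int (k + 3)) (\<rho> (dhom (k - 1) (cvar (k - 1) ^ 3)) v) =
      \<rho> (dhom (-1) (cvar (-1))) (\<rho> (dhom k (cvar k ^ 3)) v)
      - sc ((1 + 3 * of_int k) / 4) (\<rho> (dhom (k - 1) (cvar (k - 1))) v)"
    by (simp add: algebra_simps)
  then have "sc (of_int (k + 3)) (\<rho> (dhom (k - 1) (cvar (k - 1) ^ 3)) v) \<in> vir_span"
    using k_v by (simp add: vir_span_diff vir_span_scale vir_span_cvar vir_span_v)
  then have "sc (1 / of_int (k + 3)) (sc (of_int (k + 3)) (\<rho> (dhom (k - 1) (cvar (k - 1) ^ 3)) v)) \<in> vir_span"
    by (rule vir_span_scale)
  moreover have "k + 3 \<noteq> 0"
    using k by simp
  then have "of_int (k + 3) \<noteq> (0 :: complex)"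
    using of_int_eq_0_iff by blast
  ultimately show ?thesis
    by simp
qed

definition preserves_vir_span :: "dop \<Rightarrow> bool" where
  "preserves_vir_span a \<longleftrightarrow> a \<in> Dplus \<and> (\<forall>x\<in>vir_span. \<rho> a x \<in> vir_span)"

lemma preserves_vir_span_pbracket:
  assumes f: "sigma_odd j f" and g: "sigma_odd k g"
    and "preserves_vir_span (dhom j f)" and "preserves_vir_span (dhom k g)"
  shows "preserves_vir_span (dhom (j + k) (pbracket j f k g))"
  unfolding preserves_vir_span_def
proof (intro conjI ballI)
  show "dhom (j + k) (pbracket j f k g) \<in> Dplus"
    using sigma_odd_pbracket[OF f g] by simp
  fix x assume x: "x \<in> vir_span"
  have "\<rho> (dhom (j + k) (pbracket j f k g)) x =
      \<rho> (dhom j f) (\<rho> (dhom k g) x) - \<rho> (dhom k g) (\<rho> (dhom j f) x) - sc (c * psi_hom j f k g) x"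
    using rho_commutator[OF f g vir_span_K[OF x]] by (simp add: algebra_simps)
  then show "\<rho> (dhom (j + k) (pbracket j f k g)) x \<in> vir_span"
    using assms(3,4) x unfolding preserves_vir_span_def by (auto intro!: vir_span_diff vir_span_scale)
qed

lemma preserves_vir_span_lincomb:
  assumes f: "sigma_odd k f" and g: "sigma_odd k g"
    and "preserves_vir_span (dhom k f)" and "preserves_vir_span (dhom k g)"
  shows "preserves_vir_span (dhom k (smult z f + smult w g))"
  unfolding preserves_vir_span_def
proof (intro conjI ballI)
  show "dhom k (smult z f + smult w g) \<in> Dplus"
    using f g by (simp add: sigma_odd_add sigma_odd_smult)
  fix x assume x: "x \<in> vir_span"
  then show "\<rho> (dhom k (smult z f + smult w g)) x \<in> vir_span"
    unfolding rho_dhom_lincomb[OF f g vir_span_K[OF x]]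
    using assms(3,4) unfolding preserves_vir_span_def by (auto intro!: vir_span_add vir_span_scale)
qed

lemma preserves_vir_span_0: "preserves_vir_span (dhom k 0)"
  using rho_zero_op vir_span_K vir_span_0 by (simp add: preserves_vir_span_def del: dhom_0) simp

lemma preserves_vir_span_cvar: "preserves_vir_span (dhom k (cvar k))"
  by (simp add: preserves_vir_span_def sigma_odd_cvar vir_span_cvar)

context
  assumes cube_v: "\<rho> (dhom (-4) (cvar (-4) ^ 3)) v \<in> vir_span"
begin

lemma cube_mode_v: "\<rho> (dhom k (cvar k ^ 3)) v \<in> vir_span"
proof -
  consider "0 \<le> k" | "k = -1" | "k = -2" | "k = -3" | "k \<le> -4"
    by linarith
  then show ?thesis
  proof cases
    case 1
    then show ?thesis
      using hw_annihilated[OF _ sigma_odd_cvar_cube] vir_span_0 by simp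
  next
    case 2
    then show ?thesis
      using minus1_mode_v[OF sigma_odd_cvar_cube] vir_span_0 by simp
  next
    case 3
    then show ?thesis
      using minus2_mode_v[OF sigma_odd_cvar_cube] by (simp add: vir_span_scale vir_span_cvar vir_span_v)
  next
    case 4
    then show ?thesis
      using minus3_mode_v[OF sigma_odd_cvar_cube] by (simp add: vir_span_scale vir_span_cvar vir_span_v)
  next
    case 5
    then show ?thesis
    proof (induction k rule: int_le_induct)
      case base
      then show ?case
        using cube_v by simp
    next
      case (step i)
      then show ?case
        using cube_mode_v_step by simp
    qed
  qed
qed

lemma preserves_vir_span_cube: "preserves_vir_span (dhom k (cvar k ^ 3))"
  unfolding preserves_vir_span_def
proof (intro conjI ballI)
  show "dhom k (cvar k ^ 3) \<in> Dplus"
    by (simp add: sigma_odd_cvar_cube)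
  fix x assume "x \<in> vir_span"
  then show "\<rho> (dhom k (cvar k ^ 3)) x \<in> vir_span"
  proof (induction x arbitrary: k rule: vir_span.induct)
    case vir_span_v
    then show ?case
      by (rule cube_mode_v)
  next
    case (vir_span_mode x j)
    have x: "x \<in> K"
      by (rule vir_span_K[OF vir_span_mode.hyps])
    have bracket: "pbracket k (cvar k ^ 3) j (- cvar j) =
        smult (- of_int (3 * j - k)) (cvar (k + j) ^ 3) + smult (- (of_int (j ^ 3 - 3 * k * j ^ 2) / 4)) (cvar (k + j))"
      unfolding pbracket_minus_right pbracket_cube_cvar by (simp add: smult_diff_left)
    have "\<rho> (dhom k (cvar k ^ 3)) (\<rho> (Wmode 1 j) x) =
        \<rho> (Wmode 1 j) (\<rho> (dhom k (cvar k ^ 3)) x) + \<rho> (dhom (k + j) (pbracket k (cvar k ^ 3) j (- cvar j))) x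
        + sc (c * psi_hom k (cvar k ^ 3) j (- cvar j)) x"
      unfolding Wmode_1 by (rule rho_commutator[OF sigma_odd_cvar_cube sigma_odd_minus[OF sigma_odd_cvar] x])
    also have "\<dots> = \<rho> (Wmode 1 j) (\<rho> (dhom k (cvar k ^ 3)) x)
        + sc (- of_int (3 * j - k)) (\<rho> (dhom (k + j) (cvar (k + j) ^ 3)) x)
        + sc (- (of_int (j ^ 3 - 3 * k * j ^ 2) / 4)) (\<rho> (dhom (k + j) (cvar (k + j))) x)
        + sc (c * psi_hom k (cvar k ^ 3) j (- cvar j)) x"
      unfolding bracket rho_dhom_lincomb[OF sigma_odd_cvar_cube sigma_odd_cvar x] by simp
    finally show ?case
      by (rule forw_subst) (intro vir_span_add vir_span_diff vir_span_scale vir_span.vir_span_mode vir_span_cvar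
          vir_span_mode.IH vir_span_mode.hyps)
  next
    case (vir_span_add x y)
    then show ?case
      using rho_add[of "dhom k (cvar k ^ 3)" x y] by (simp add: sigma_odd_cvar_cube vir_span.vir_span_add)
  next
    case (vir_span_scale x z)
    then show ?case
      using rho_scale[of "dhom k (cvar k ^ 3)" z x] by (simp add: sigma_odd_cvar_cube vir_span.vir_span_scale)
  qed
qed

lemma preserves_vir_span_nonzero_degree:
  assumes k: "k \<noteq> 0" and f: "sigma_odd k f"
  shows "preserves_vir_span (dhom k f)"
  using f
proof (induction "degree f" arbitrary: f rule: less_induct)
  case less
  obtain h z where f_eq: "f = cube_factor k * h + smult z (cvar k)" and h: "sigma_odd k h"
    and deg_h: "h = 0 \<or> degree h < degree f"
    using sigma_odd_division[OF k less.prems] by blast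
  have "preserves_vir_span (dhom k h)"
    using deg_h less.hyps[OF _ h] preserves_vir_span_0 by auto
  then have "preserves_vir_span (dhom k (cube_factor k * h))"
    using preserves_vir_span_pbracket[of 0 "cvar 0 ^ 3" k h, OF sigma_odd_cvar_cube h preserves_vir_span_cube]
    by (simp add: pbracket_cube_0)
  moreover have "sigma_odd k (cube_factor k * h)"
    using sigma_odd_pbracket[OF sigma_odd_cvar_cube h, of 0] by (simp add: pbracket_cube_0)
  ultimately show ?case
    using preserves_vir_span_lincomb[of k "cube_factor k * h" "cvar k" 1 z, OF _ sigma_odd_cvar _ preserves_vir_span_cvar]
    by (simp add: f_eq)
qed

lemma preserves_vir_span_degree_0:
  assumes f: "sigma_odd 0 f"
  shows "preserves_vir_span (dhom 0 f)"
  unfolding preserves_vir_span_def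
proof (intro conjI ballI)
  show "dhom 0 f \<in> Dplus"
    using f by simp
  fix x assume "x \<in> vir_span"
  then show "\<rho> (dhom 0 f) x \<in> vir_span"
  proof (induction rule: vir_span.induct)
    case vir_span_v
    then show ?case
      using hw_annihilated[OF _ f] vir_span_0 by simp
  next
    case (vir_span_mode x j)
    have x: "x \<in> K"
      by (rule vir_span_K[OF vir_span_mode.hyps])
    have "\<rho> (dhom j (pbracket 0 f j (- cvar j))) x \<in> vir_span"
    proof (cases "j = 0")
      case True
      then show ?thesis
        using rho_zero_op[OF x] vir_span_0 by (simp add: pbracket_0_0)
    next
      case False
      have "sigma_odd j (pbracket 0 f j (- cvar j))"
        using sigma_odd_pbracket[OF f sigma_odd_minus[OF sigma_odd_cvar], of j] by simp
      then show ?thesis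
        using preserves_vir_span_nonzero_degree[OF False] vir_span_mode.hyps
        by (simp add: preserves_vir_span_def)
    qed
    moreover have "\<rho> (dhom 0 f) (\<rho> (Wmode 1 j) x) =
        \<rho> (Wmode 1 j) (\<rho> (dhom 0 f) x) + \<rho> (dhom j (pbracket 0 f j (- cvar j))) x"
      unfolding Wmode_1 using rho_commutator[OF f sigma_odd_minus[OF sigma_odd_cvar] x, of j] by simp
    ultimately show ?case
      using vir_span_mode.IH by (simp add: vir_span.intros del: One_nat_def)
  next
    case (vir_span_add x y)
    then show ?case
      using rho_add[of "dhom 0 f" x y] f by (simp add: vir_span.vir_span_add)
  next
    case (vir_span_scale x z)
    then show ?case
      using rho_scale[of "dhom 0 f" z x] f by (simp add: vir_span.vir_span_scale)
  qed
qed

lemma vir_span_invariant: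
  assumes a: "a \<in> Dplus" and x: "x \<in> vir_span"
  shows "\<rho> a x \<in> vir_span"
proof (rule rho_mem_by_components[OF a vir_span_K[OF x]])
  fix k
  have "preserves_vir_span (dhom k (a k))"
    using preserves_vir_span_degree_0 preserves_vir_span_nonzero_degree Dplus_sigma_odd[OF a]
    by (cases "k = 0") auto
  then show "\<rho> (dhom k (a k)) x \<in> vir_span"
    using x by (simp add: preserves_vir_span_def)
qed (auto intro: vir_span_0 vir_span_add)

end

theorem vir_span_Dplus_invariant:
  assumes "c = 1/2" and "a \<in> Dplus" and "x \<in> vir_span"
  shows "\<rho> a x \<in> vir_span"
proof (rule vir_span_invariant[OF _ assms(2,3)])
  show "\<rho> (dhom (-4) (cvar (-4) ^ 3)) v \<in> vir_span"
    unfolding cube_mode_relation[OF assms(1)]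
    by (intro vir_span_add vir_span_scale vir_span_cvar vir_span_v)
qed

end

section \<open>The vacuum module\<close>

locale Vplus_model =
  fixes sc :: "complex \<Rightarrow> 'v::ab_group_add \<Rightarrow> 'v" and c :: complex
    and \<rho> :: "dop \<Rightarrow> 'v \<Rightarrow> 'v" and v0 :: 'v
  assumes Vplus: "is_Vplus sc c \<rho> v0"
begin

lemma v0_nonzero: "v0 \<noteq> 0"
  using Vplus by (simp add: is_Vplus_def)

lemma irreducible:
  assumes "module.subspace sc S" and "\<And>a x. a \<in> Dplus \<Longrightarrow> x \<in> S \<Longrightarrow> \<rho> a x \<in> S"
  shows "S = {0} \<or> S = UNIV"
proof -
  have "\<forall>S. module.subspace sc S \<and> (\<forall>a\<in>Dplus. \<forall>v\<in>S. \<rho> a v \<in> S) \<longrightarrow> S = {0} \<or> S = UNIV"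
    using Vplus by (simp add: is_Vplus_def)
  then show ?thesis
    using assms by blast
qed

lemma v0_annihilated:
  assumes "0 \<le> k" and "sigma_odd k f"
  shows "\<rho> (dhom k f) v0 = 0"
proof -
  have pos: "\<forall>a\<in>Dplus. (\<forall>j\<le>0. a j = 0) \<longrightarrow> \<rho> a v0 = 0"
    using Vplus unfolding is_Vplus_def by (elim conjE) assumption
  have zero: "\<forall>a\<in>Dplus. (\<forall>j. j \<noteq> 0 \<longrightarrow> a j = 0) \<longrightarrow> \<rho> a v0 = 0"
    using Vplus unfolding is_Vplus_def by (elim conjE) assumption
  have a: "dhom k f \<in> Dplus"
    using assms(2) by simp
  show ?thesis
  proof (cases "k = 0")
    case True
    then have "\<forall>j. j \<noteq> 0 \<longrightarrow> dhom k f j = 0"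
      by (simp add: dhom_def)
    then show ?thesis
      using bspec[OF zero a] by blast
  next
    case False
    then have "\<forall>j\<le>0. dhom k f j = 0"
      using assms(1) by (simp add: dhom_def)
    then show ?thesis
      using bspec[OF pos a] by blast
  qed
qed

sublocale Dplus_module sc c \<rho> UNIV
proof -
  have rep: "Dplus_rep sc c \<rho>"
    using Vplus by (simp add: is_Vplus_def)
  have vs: "vector_space sc"
    using rep by (simp add: Dplus_rep_def)
  have hom: "module_hom sc sc (\<rho> a)" if "a \<in> Dplus" for a
    using rep that by (simp add: Dplus_rep_def module_hom_iff_linear)
  have lincomb: "\<forall>a\<in>Dplus. \<forall>b\<in>Dplus. \<forall>z w v.
      \<rho> (\<lambda>k. dscale z a k + dscale w b k) v = sc z (\<rho> a v) + sc w (\<rho> b v)"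
    using rep by (simp add: Dplus_rep_def)
  have comm: "\<forall>a\<in>Dplus. \<forall>b\<in>Dplus. \<forall>v.
      \<rho> a (\<rho> b v) - \<rho> b (\<rho> a v) = \<rho> (dbracket a b) v + sc (c * Psi a b) v"
    using rep by (simp add: Dplus_rep_def)
  show "Dplus_module sc c \<rho> UNIV"
  proof (rule Dplus_module.intro[OF vs], rule Dplus_module_axioms.intro)
    fix j f k g x
    assume "sigma_odd j f" "sigma_odd k g"
    then have "\<rho> (dhom j f) (\<rho> (dhom k g) x) - \<rho> (dhom k g) (\<rho> (dhom j f) x) =
        \<rho> (dhom (j + k) (pbracket j f k g)) x + sc (c * psi_hom j f k g) x"
      using comm by (simp add: dbracket_dhom Psi_dhom)
    then show "\<rho> (dhom j f) (\<rho> (dhom k g) x) =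
        \<rho> (dhom k g) (\<rho> (dhom j f) x) + \<rho> (dhom (j + k) (pbracket j f k g)) x + sc (c * psi_hom j f k g) x"
      by (simp add: algebra_simps)
  next
    show "\<rho> a (x + y) = \<rho> a x + \<rho> a y" if "a \<in> Dplus" for a x y
      by (rule module_hom.add[OF hom[OF that]])
    show "\<rho> a (sc z x) = sc z (\<rho> a x)" if "a \<in> Dplus" for a z x
      by (rule module_hom.scale[OF hom[OF that]])
    show "\<rho> (\<lambda>k. dscale z a k + dscale w b k) x = sc z (\<rho> a x) + sc w (\<rho> b x)"
      if "a \<in> Dplus" "b \<in> Dplus" for a b z w x
      using lincomb that by blast
  qed simp_all
qed

lemma deg_op_v0: "\<rho> deg_op v0 = 0"
  using v0_annihilated[OF _ sigma_odd_cvar, of 0] by simp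

text \<open>PBW-ordered monomials applied to \<open>u\<close>: zero modes first, then negative modes. For singular \<open>u\<close>
  they span the submodule generated by \<open>u\<close>.\<close>

inductive_set zero_mode_orbit for u :: 'v where
  zero_mode_orbit_base: "u \<in> zero_mode_orbit u"
| zero_mode_orbit_step: "x \<in> zero_mode_orbit u \<Longrightarrow> sigma_odd 0 h \<Longrightarrow> \<rho> (dhom 0 h) x \<in> zero_mode_orbit u"

inductive_set lowering_orbit for u :: 'v where
  lowering_orbit_base: "x \<in> zero_mode_orbit u \<Longrightarrow> x \<in> lowering_orbit u"
| lowering_orbit_step: "x \<in> lowering_orbit u \<Longrightarrow> k < 0 \<Longrightarrow> sigma_odd k f \<Longrightarrow> \<rho> (dhom k f) x \<in> lowering_orbit u"

lemma zero_mode_orbit_singular: "x \<in> zero_mode_orbit u \<Longrightarrow> singular u \<Longrightarrow> singular x"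
proof (induction rule: zero_mode_orbit.induct)
  case (zero_mode_orbit_step x h)
  show ?case
    unfolding singular_def
  proof (intro allI impI)
    fix p g assume p: "0 < p" and g: "sigma_odd p g"
    have "sigma_odd p (pbracket p g 0 h)"
      using sigma_odd_pbracket[OF g zero_mode_orbit_step.hyps(2)] by simp
    then have "\<rho> (dhom p g) x = 0" and "\<rho> (dhom p (pbracket p g 0 h)) x = 0"
      using zero_mode_orbit_step.IH[OF zero_mode_orbit_step.prems] p g by (simp_all add: singular_def)
    then show "\<rho> (dhom p g) (\<rho> (dhom 0 h) x) = 0"
      using rho_commutator[OF g zero_mode_orbit_step.hyps(2), of x] rho_0[of "dhom 0 h"]
        zero_mode_orbit_step.hyps(2) p
      by (simp add: psi_hom_def)
  qed
qed

lemma lowering_orbit_mode: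
  "x \<in> lowering_orbit u \<Longrightarrow> singular u \<Longrightarrow> sigma_odd k f \<Longrightarrow> \<rho> (dhom k f) x \<in> span (lowering_orbit u)"
proof (induction x arbitrary: k f rule: lowering_orbit.induct)
  case (lowering_orbit_base x)
  consider "0 < k" | "k = 0" | "k < 0"
    by linarith
  then show ?case
  proof cases
    case 1
    then show ?thesis
      using zero_mode_orbit_singular[OF lowering_orbit_base.hyps lowering_orbit_base.prems(1)]
        lowering_orbit_base.prems(2) span_zero
      by (simp add: singular_def)
  next
    case 2
    then show ?thesis
      using zero_mode_orbit_step[OF lowering_orbit_base.hyps, of f] lowering_orbit_base.prems(2)
      by (auto intro: span_base lowering_orbit.lowering_orbit_base)
  next
    case 3
    then show ?thesis
      using lowering_orbit_step[OF lowering_orbit.lowering_orbit_base[OF lowering_orbit_base.hyps] 3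
          lowering_orbit_base.prems(2)]
      by (auto intro: span_base)
  qed
next
  case (lowering_orbit_step x k' f')
  show ?case
  proof (cases "k < 0")
    case True
    then show ?thesis
      using lowering_orbit.lowering_orbit_step[OF lowering_orbit.lowering_orbit_step[OF lowering_orbit_step.hyps]
          True lowering_orbit_step.prems(2)]
      by (auto intro: span_base)
  next
    case False
    have "\<rho> (dhom k' f') (\<rho> (dhom k f) x) \<in> span (lowering_orbit u)"
    proof (rule rho_span)
      show "dhom k' f' \<in> Dplus"
        using lowering_orbit_step.hyps(3) by simp
      show "\<rho> (dhom k' f') y \<in> span (lowering_orbit u)" if "y \<in> lowering_orbit u" for y
        using lowering_orbit.lowering_orbit_step[OF that lowering_orbit_step.hyps(2,3)] by (rule span_base)
      show "\<rho> (dhom k f) x \<in> span (lowering_orbit u)"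
        by (rule lowering_orbit_step.IH[OF lowering_orbit_step.prems])
    qed
    moreover have "\<rho> (dhom (k + k') (pbracket k f k' f')) x \<in> span (lowering_orbit u)"
      by (rule lowering_orbit_step.IH[OF lowering_orbit_step.prems(1)
            sigma_odd_pbracket[OF lowering_orbit_step.prems(2) lowering_orbit_step.hyps(3)]])
    moreover have "sc (c * psi_hom k f k' f') x \<in> span (lowering_orbit u)"
      using lowering_orbit_step.hyps(1) by (intro span_scale span_base)
    ultimately show ?thesis
      using rho_commutator[OF lowering_orbit_step.prems(2) lowering_orbit_step.hyps(3), of x]
      by (simp add: span_add)
  qed
qed

lemma span_lowering_orbit_invariant:
  assumes u: "singular u" and a: "a \<in> Dplus" and y: "y \<in> span (lowering_orbit u)"
  shows "\<rho> a y \<in> span (lowering_orbit u)"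
proof (rule rho_mem_by_components[OF a])
  fix k
  have odd: "sigma_odd k (a k)"
    by (rule Dplus_sigma_odd[OF a])
  show "\<rho> (dhom k (a k)) y \<in> span (lowering_orbit u)"
  proof (rule rho_span[OF _ _ y])
    show "dhom k (a k) \<in> Dplus"
      using odd by simp
    show "\<rho> (dhom k (a k)) x \<in> span (lowering_orbit u)" if "x \<in> lowering_orbit u" for x
      by (rule lowering_orbit_mode[OF that u odd])
  qed
qed (auto intro: span_zero span_add)

lemma lowering_orbit_weight:
  assumes x: "x \<in> lowering_orbit u" and u: "u \<in> weight_space N"
  shows "\<exists>n\<ge>N. x \<in> weight_space n"
  using x
proof (induction rule: lowering_orbit.induct)
  case (lowering_orbit_base x)
  then have "x \<in> weight_space N"
  proof (induction rule: zero_mode_orbit.induct)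
    case (zero_mode_orbit_step x h)
    then show ?case
      using weight_space_lowering[of x N 0 h] by simp
  qed (rule u)
  then show ?case
    by blast
next
  case (lowering_orbit_step x k f)
  then obtain n where "n \<ge> N" and "x \<in> weight_space n"
    by blast
  then show ?case
    using weight_space_lowering[of x n k f] lowering_orbit_step.hyps(2,3)
    by (intro exI[of _ "n + nat (- k)"]) simp
qed

definition pos_weight_vectors :: "'v set" where
  "pos_weight_vectors = {x. \<exists>n \<ge> 1. x \<in> weight_space n}"

lemma zero_pos_weight: "0 \<in> pos_weight_vectors"
  using rho_0[of deg_op] unfolding pos_weight_vectors_def weight_space_def
  by (auto simp: sigma_odd_cvar intro: exI[of _ 1])

lemma pos_weight_vectors_lowering:
  assumes x: "x \<in> pos_weight_vectors" and k: "k \<le> 0" and f: "sigma_odd k f"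
  shows "\<rho> (dhom k f) x \<in> pos_weight_vectors"
proof -
  obtain n where "1 \<le> n" and "x \<in> weight_space n"
    using x by (auto simp: pos_weight_vectors_def)
  then show ?thesis
    using weight_space_lowering[of x n k f] k f unfolding pos_weight_vectors_def
    by (intro CollectI exI[of _ "n + nat (- k)"]) simp
qed

lemma rho_v0_pos_weight:
  assumes k: "k \<le> 0" and f: "sigma_odd k f"
  shows "\<rho> (dhom k f) v0 \<in> pos_weight_vectors"
proof (cases "k = 0")
  case True
  then show ?thesis
    using v0_annihilated f zero_pos_weight by simp
next
  case False
  have "v0 \<in> weight_space 0"
    using deg_op_v0 by (simp add: weight_space_def)
  then show ?thesis
    using weight_space_lowering[of v0 0 k f] k f False unfolding pos_weight_vectors_def
    by (intro CollectI exI[of _ "nat (- k)"]) simp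
qed

lemma deg_op_span_pos_weight:
  assumes "t \<subseteq> pos_weight_vectors" and "y \<in> span t"
  shows "\<rho> deg_op y \<in> span t"
proof (rule rho_span[OF _ _ assms(2)])
  show "\<rho> deg_op x \<in> span t" if x: "x \<in> t" for x
  proof -
    obtain n :: nat where "\<rho> deg_op x = sc (- of_nat n) x"
      using x assms(1) unfolding pos_weight_vectors_def weight_space_def by blast
    then show ?thesis
      using x by (metis span_base span_scale)
  qed
qed (simp add: sigma_odd_cvar)

text \<open>Eigenvectors of \<open>deg_op\<close> can be separated inside a \<open>deg_op\<close>-invariant subspace: apply
  \<open>deg_op + n\<close> to kill the eigencomponents one at a time.\<close>

lemma v0_component_mem_finite:
  assumes T: "subspace T" and T_deg: "\<And>x. x \<in> T \<Longrightarrow> \<rho> deg_op x \<in> T"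
    and t: "finite t" "t \<subseteq> pos_weight_vectors"
  shows "x \<in> T \<Longrightarrow> x - sc z v0 \<in> span t \<Longrightarrow> sc z v0 \<in> T"
  using t
proof (induction t arbitrary: x z rule: finite_induct)
  case (insert a t)
  obtain n :: nat where n: "1 \<le> n" "\<rho> deg_op a = sc (- of_nat n) a"
    using insert.prems unfolding pos_weight_vectors_def weight_space_def by blast
  obtain r where r: "x - sc z v0 - sc r a \<in> span t"
    using insert.prems(2) by (auto simp: span_breakdown_eq)
  define y where "y = x - sc z v0 - sc r a"
  have "\<rho> deg_op x + sc (of_nat n) x \<in> T"
    using insert.prems(1) T T_deg by (simp add: subspace_add subspace_scale)
  moreover have "\<rho> deg_op x + sc (of_nat n) x - sc (of_nat n * z) v0 = \<rho> deg_op y + sc (of_nat n) y"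
    using n(2) deg_op_v0
    by (simp add: y_def rho_diff rho_add rho_scale sigma_odd_cvar algebra_simps scale_right_diff_distrib)
  moreover have "\<rho> deg_op y + sc (of_nat n) y \<in> span t"
    using r insert.prems deg_op_span_pos_weight[of t y] by (simp add: y_def span_add span_scale)
  ultimately have "sc (of_nat n * z) v0 \<in> T"
    using insert.IH insert.prems by force
  then have "sc (1 / of_nat n) (sc (of_nat n * z) v0) \<in> T"
    using subspace_scale[OF T] by blast
  then show "sc z v0 \<in> T"
    using n(1) by simp
qed simp

lemma v0_component_mem:
  assumes T: "subspace T" and T_deg: "\<And>x. x \<in> T \<Longrightarrow> \<rho> deg_op x \<in> T"
    and x: "x \<in> T" and x_v0: "x - sc z v0 \<in> span pos_weight_vectors"
  shows "sc z v0 \<in> T"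
proof -
  obtain t r where "finite t" "t \<subseteq> pos_weight_vectors" and sum: "x - sc z v0 = (\<Sum>a\<in>t. sc (r a) a)"
    using x_v0 unfolding span_explicit by blast
  moreover have "(\<Sum>a\<in>t. sc (r a) a) \<in> span t"
    by (intro span_sum span_scale span_base)
  ultimately show ?thesis
    using v0_component_mem_finite[OF T T_deg] x by metis
qed

lemma v0_notin_span_pos_weight: "sc z v0 \<in> span pos_weight_vectors \<Longrightarrow> z = 0"
  using v0_component_mem[of "{0}" 0 "- z"] rho_0[of deg_op] v0_nonzero
  by (auto simp: sigma_odd_cvar)

lemma singular_pos_weight_eq_0:
  assumes N: "0 < N" and u_weight: "u \<in> weight_space N" and u: "singular u"
  shows "u = 0"
proof -
  have "span (lowering_orbit u) = {0} \<or> span (lowering_orbit u) = UNIV"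
    using span_lowering_orbit_invariant[OF u] by (intro irreducible) auto
  moreover have "lowering_orbit u \<subseteq> pos_weight_vectors"
  proof
    fix x assume "x \<in> lowering_orbit u"
    then obtain n where "n \<ge> N" and "x \<in> weight_space n"
      using lowering_orbit_weight[OF _ u_weight] by blast
    then show "x \<in> pos_weight_vectors"
      using N unfolding pos_weight_vectors_def by (intro CollectI exI[of _ n]) simp
  qed
  then have "span (lowering_orbit u) \<noteq> UNIV"
    using v0_notin_span_pos_weight[of 1] span_mono by (metis UNIV_I scale_one subsetD zero_neq_one)
  moreover have "u \<in> span (lowering_orbit u)"
    by (intro span_base lowering_orbit_base zero_mode_orbit_base)
  ultimately show "u = 0"
    by blast
qed

sublocale Dplus_hw_module sc c \<rho> UNIV v0
  by unfold_locales (auto intro: v0_annihilated singular_pos_weight_eq_0)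

lemma zero_mode_orbit_v0: "x \<in> zero_mode_orbit v0 \<Longrightarrow> x = v0 \<or> x = 0"
  by (induction rule: zero_mode_orbit.induct) (auto simp: v0_annihilated rho_0)

lemma lowering_orbit_v0: "x \<in> lowering_orbit v0 \<Longrightarrow> x = v0 \<or> x \<in> pos_weight_vectors"
proof (induction rule: lowering_orbit.induct)
  case (lowering_orbit_base x)
  then show ?case
    using zero_mode_orbit_v0 zero_pos_weight by blast
next
  case (lowering_orbit_step x k f)
  then show ?case
    using rho_v0_pos_weight pos_weight_vectors_lowering by force
qed

lemma span_lowering_orbit_v0: "span (lowering_orbit v0) = UNIV"
proof -
  have "singular v0"
    using hw_annihilated by (simp add: singular_def)
  then have "span (lowering_orbit v0) = {0} \<or> span (lowering_orbit v0) = UNIV"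
    using span_lowering_orbit_invariant by (intro irreducible) auto
  moreover have "v0 \<in> span (lowering_orbit v0)"
    by (intro span_base lowering_orbit_base zero_mode_orbit_base)
  ultimately show ?thesis
    using v0_nonzero by blast
qed

lemma v0_decomposition: "\<exists>z. x - sc z v0 \<in> span pos_weight_vectors"
proof -
  have "lowering_orbit v0 \<subseteq> insert v0 pos_weight_vectors"
    using lowering_orbit_v0 by blast
  then have "x \<in> span (insert v0 pos_weight_vectors)"
    using span_lowering_orbit_v0 span_mono by blast
  then show ?thesis
    by (simp add: span_breakdown_eq)
qed

definition v0_coord :: "'v \<Rightarrow> complex" where
  "v0_coord x = (THE z. x - sc z v0 \<in> span pos_weight_vectors)"

lemma v0_coord_eqI:
  assumes "x - sc z v0 \<in> span pos_weight_vectors"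
  shows "v0_coord x = z"
  unfolding v0_coord_def
proof (rule the_equality)
  fix z' assume "x - sc z' v0 \<in> span pos_weight_vectors"
  then have "(x - sc z' v0) - (x - sc z v0) \<in> span pos_weight_vectors"
    using assms by (rule span_diff)
  then have "sc (z - z') v0 \<in> span pos_weight_vectors"
    by (simp add: scale_left_diff_distrib)
  then show "z' = z"
    using v0_notin_span_pos_weight by force
qed (rule assms)

lemma v0_coord: "x - sc (v0_coord x) v0 \<in> span pos_weight_vectors"
  using v0_decomposition[of x] v0_coord_eqI by metis

lemma v0_coord_add: "v0_coord (x + y) = v0_coord x + v0_coord y"
proof (rule v0_coord_eqI)
  have "(x - sc (v0_coord x) v0) + (y - sc (v0_coord y) v0) \<in> span pos_weight_vectors"
    using v0_coord by (intro span_add)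
  then show "x + y - sc (v0_coord x + v0_coord y) v0 \<in> span pos_weight_vectors"
    by (simp add: scale_left_distrib algebra_simps)
qed

lemma v0_coord_scale: "v0_coord (sc z x) = z * v0_coord x"
proof (rule v0_coord_eqI)
  have "sc z (x - sc (v0_coord x) v0) \<in> span pos_weight_vectors"
    using v0_coord by (intro span_scale)
  then show "sc z x - sc (z * v0_coord x) v0 \<in> span pos_weight_vectors"
    by (simp add: scale_right_diff_distrib)
qed

lemma v0_coord_v0: "v0_coord v0 = 1"
  by (rule v0_coord_eqI) (simp add: span_zero)

lemma v0_coord_rho_nonpos:
  assumes k: "k \<le> 0" and f: "sigma_odd k f"
  shows "v0_coord (\<rho> (dhom k f) x) = 0"
proof (rule v0_coord_eqI)
  have a: "dhom k f \<in> Dplus"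
    using f by simp
  define y where "y = x - sc (v0_coord x) v0"
  have "\<rho> (dhom k f) y \<in> span pos_weight_vectors"
    using pos_weight_vectors_lowering[OF _ k f]
    by (intro rho_span[OF a _ v0_coord[of x, folded y_def]]) (blast intro: span_base)
  then have "sc (v0_coord x) (\<rho> (dhom k f) v0) + \<rho> (dhom k f) y \<in> span pos_weight_vectors"
    using rho_v0_pos_weight[OF k f] by (meson span_add span_base span_scale)
  then show "\<rho> (dhom k f) x - sc 0 v0 \<in> span pos_weight_vectors"
    by (simp add: y_def rho_diff[OF a] rho_scale[OF a])
qed

end

subsection \<open>The contragredient module\<close>

definition fscale :: "complex \<Rightarrow> ('v \<Rightarrow> complex) \<Rightarrow> 'v \<Rightarrow> complex" where
  "fscale z \<phi> = (\<lambda>x. z * \<phi> x)"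

lemma vector_space_fscale: "vector_space fscale"
  unfolding vector_space_def fscale_def by (simp add: fun_eq_iff algebra_simps)

context Vplus_model
begin

definition linear_functionals :: "('v \<Rightarrow> complex) set" where
  "linear_functionals = {\<phi>. (\<forall>x y. \<phi> (x + y) = \<phi> x + \<phi> y) \<and> (\<forall>z x. \<phi> (sc z x) = z * \<phi> x)}"

definition rho_dual :: "dop \<Rightarrow> ('v \<Rightarrow> complex) \<Rightarrow> 'v \<Rightarrow> complex" where
  "rho_dual a \<phi> = (\<lambda>x. \<phi> (\<rho> (dtheta a) x))"

lemma linear_functionalsD:
  assumes "\<phi> \<in> linear_functionals"
  shows "\<phi> (x + y) = \<phi> x + \<phi> y" and "\<phi> (sc z x) = z * \<phi> x" and "\<phi> 0 = 0"
proof -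
  show add: "\<phi> (x + y) = \<phi> x + \<phi> y" and scale: "\<phi> (sc z x) = z * \<phi> x" for x y z
    using assms by (simp_all add: linear_functionals_def)
  show "\<phi> 0 = 0"
    using scale[of 0 0] by simp
qed

lemma rho_dual_dhom: "rho_dual (dhom j f) \<phi> = (\<lambda>x. \<phi> (\<rho> (dhom (- j) (pshift f (- j))) x))"
  by (simp add: rho_dual_def dtheta_dhom)

lemma dual_module: "Dplus_module fscale c rho_dual linear_functionals"
proof (rule Dplus_module.intro[OF vector_space_fscale], rule Dplus_module_axioms.intro)
  show "rho_dual a \<phi> \<in> linear_functionals" if "a \<in> Dplus" and "\<phi> \<in> linear_functionals" for a \<phi>
    using rho_add[OF Dplus_dtheta] rho_scale[OF Dplus_dtheta] linear_functionalsD[OF that(2)] that(1)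
    by (simp add: linear_functionals_def rho_dual_def)
  show "rho_dual (\<lambda>k. dscale z a k + dscale w b k) \<phi> = fscale z (rho_dual a \<phi>) + fscale w (rho_dual b \<phi>)"
    if "a \<in> Dplus" and "b \<in> Dplus" and "\<phi> \<in> linear_functionals" for a b z w \<phi>
    unfolding rho_dual_def fscale_def dtheta_lincomb
    using rho_lincomb[OF Dplus_dtheta[OF that(1)] Dplus_dtheta[OF that(2)]] linear_functionalsD[OF that(3)]
    by (simp add: fun_eq_iff)
  show "rho_dual (dhom j f) (rho_dual (dhom k g) \<phi>) =
      rho_dual (dhom k g) (rho_dual (dhom j f) \<phi>) + rho_dual (dhom (j + k) (pbracket j f k g)) \<phi>
      + fscale (c * psi_hom j f k g) \<phi>"
    if f: "sigma_odd j f" and g: "sigma_odd k g" and \<phi>: "\<phi> \<in> linear_functionals" for j f k g \<phi>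
  proof -
    have "\<rho> (dhom (- k) (pshift g (- k))) (\<rho> (dhom (- j) (pshift f (- j))) x) =
        \<rho> (dhom (- j) (pshift f (- j))) (\<rho> (dhom (- k) (pshift g (- k))) x)
        + \<rho> (dhom (- (j + k)) (pshift (pbracket j f k g) (- (j + k)))) x + sc (c * psi_hom j f k g) x" for x
      using rho_commutator[OF sigma_odd_dtheta[OF g] sigma_odd_dtheta[OF f], of x]
      by (simp add: pbracket_dtheta psi_hom_dtheta add.commute)
    then show ?thesis
      unfolding rho_dual_dhom fscale_def by (simp add: fun_eq_iff linear_functionalsD[OF \<phi>])
  qed
next
  show "0 \<in> linear_functionals"
    by (simp add: linear_functionals_def)
  show "\<phi> + \<psi> \<in> linear_functionals" if "\<phi> \<in> linear_functionals" and "\<psi> \<in> linear_functionals" for \<phi> \<psi>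
    using linear_functionalsD[OF that(1)] linear_functionalsD[OF that(2)]
    by (simp add: linear_functionals_def algebra_simps)
  show "fscale z \<phi> \<in> linear_functionals" if "\<phi> \<in> linear_functionals" for z \<phi>
    using linear_functionalsD[OF that] by (simp add: linear_functionals_def fscale_def distrib_left)
  show "rho_dual a (\<phi> + \<psi>) = rho_dual a \<phi> + rho_dual a \<psi>" for a \<phi> \<psi>
    by (simp add: rho_dual_def fun_eq_iff)
  show "rho_dual a (fscale z \<phi>) = fscale z (rho_dual a \<phi>)" for a z \<phi>
    by (simp add: rho_dual_def fscale_def fun_eq_iff)
qed

sublocale dual: Dplus_module fscale c rho_dual linear_functionals
  by (rule dual_module)

lemma v0_coord_linear: "v0_coord \<in> linear_functionals"
  by (simp add: linear_functionals_def v0_coord_add v0_coord_scale)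

text \<open>\<open>v0\<close> and the images of the negative modes span \<open>V\<close>.\<close>

lemma linear_functional_eq_0:
  assumes \<phi>: "\<phi> \<in> linear_functionals" and v0: "\<phi> v0 = 0"
    and lowering: "\<And>k f x. k < 0 \<Longrightarrow> sigma_odd k f \<Longrightarrow> \<phi> (\<rho> (dhom k f) x) = 0"
  shows "\<phi> = 0"
proof -
  have orbit: "\<phi> x = 0" if "x \<in> lowering_orbit v0" for x
    using that
  proof cases
    case lowering_orbit_base
    then show ?thesis
      using zero_mode_orbit_v0 v0 linear_functionalsD(3)[OF \<phi>] by blast
  qed (use lowering in blast)
  have "\<phi> y = 0" if "y \<in> span (lowering_orbit v0)" for y
    using that
  proof (induction rule: span_induct_alt)
    case (step z x y)
    then show ?case
      using orbit linear_functionalsD[OF \<phi>] by simp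
  qed (rule linear_functionalsD(3)[OF \<phi>])
  then show ?thesis
    using span_lowering_orbit_v0 by (auto simp: fun_eq_iff)
qed

sublocale dual: Dplus_hw_module fscale c rho_dual linear_functionals v0_coord
proof unfold_locales
  show "v0_coord \<in> linear_functionals"
    by (rule v0_coord_linear)
  show "rho_dual (dhom k f) v0_coord = 0" if "0 \<le> k" and "sigma_odd k f" for k f
    unfolding rho_dual_dhom using v0_coord_rho_nonpos[of "- k" "pshift f (- k)"] sigma_odd_dtheta that
    by (simp add: fun_eq_iff)
  show "\<phi> = 0" if \<phi>: "\<phi> \<in> linear_functionals" and N: "0 < N" and weight: "\<phi> \<in> dual.weight_space N"
    and sing: "dual.singular \<phi>" for \<phi> N
  proof (rule linear_functional_eq_0[OF \<phi>])
    have "\<phi> (\<rho> deg_op x) = - of_nat N * \<phi> x" for x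
      using fun_cong[OF weight[unfolded dual.weight_space_def mem_Collect_eq], of x]
      by (simp add: rho_dual_def dtheta_dhom fscale_def)
    then show "\<phi> v0 = 0"
      using deg_op_v0 linear_functionalsD(3)[OF \<phi>] N by (metis mult_eq_0_iff neg_equal_0_iff_equal of_nat_eq_0_iff not_gr0)
    show "\<phi> (\<rho> (dhom k f) x) = 0" if "k < 0" and "sigma_odd k f" for k f x
    proof -
      have "rho_dual (dhom (- k) (pshift f (- k))) \<phi> = 0"
        using sing that sigma_odd_dtheta[OF that(2)] by (simp add: dual.singular_def)
      then show ?thesis
        by (simp add: rho_dual_dhom pshift_pshift fun_eq_iff)
    qed
  qed
qed


context
  assumes half: "c = 1/2"
begin

lemma vir_span_eq_UNIV: "vir_span = UNIV"
proof -
  have "subspace vir_span"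
    by (rule subspaceI) (auto intro: vir_span_0 vir_span_add vir_span_scale)
  then have "vir_span = {0} \<or> vir_span = UNIV"
    using vir_span_Dplus_invariant[OF half] by (intro irreducible) auto
  moreover have "vir_span \<noteq> {0}"
    using vir_span_v v0_nonzero by blast
  ultimately show ?thesis
    by blast
qed

text \<open>The common kernel of the Virasoro submodule of the contragredient module generated by
  \<open>v0_coord\<close> is a \<open>D\<^sup>+\<close>-submodule, because that Virasoro submodule is \<open>D\<^sup>+\<close>-invariant.\<close>

lemma dual_vir_span_common_kernel: "{x. \<forall>\<phi>\<in>dual.vir_span. \<phi> x = 0} = {0}"
  (is "?R = _")
proof -
  have "?R = {0} \<or> ?R = UNIV"
  proof (rule irreducible)
    show "subspace ?R"
      by (rule subspaceI) (auto simp: linear_functionalsD dual.vir_span_K)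
    fix a x assume a: "a \<in> Dplus" and x: "x \<in> ?R"
    have "rho_dual (dtheta a) \<phi> x = 0" if "\<phi> \<in> dual.vir_span" for \<phi>
      using dual.vir_span_Dplus_invariant[OF half Dplus_dtheta[OF a] that] x by blast
    then show "\<rho> a x \<in> ?R"
      by (simp add: rho_dual_def)
  qed
  moreover have "v0 \<notin> ?R"
    using dual.vir_span_v v0_coord_v0 by force
  ultimately show ?thesis
    by blast
qed

lemma Virasoro_irreducible:
  assumes T: "subspace T" and T_inv: "\<And>k x. x \<in> T \<Longrightarrow> \<rho> (Wmode 1 k) x \<in> T"
  shows "T = {0} \<or> T = UNIV"
proof (cases "v0 \<in> T")
  case True
  then show ?thesis
    using vir_span_minimal[OF T True T_inv] vir_span_eq_UNIV by blast
next
  case False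
  have coord: "v0_coord x = 0" if x: "x \<in> T" for x
  proof (rule ccontr)
    assume nonzero: "v0_coord x \<noteq> 0"
    have "\<rho> deg_op y \<in> T" if "y \<in> T" for y
      using T_inv[OF that, of 0] subspace_neg[OF T] rho_Wmode_1[of y 0] by fastforce
    then have "sc (v0_coord x) v0 \<in> T"
      using v0_component_mem[OF T _ x v0_coord] by blast
    then have "sc (1 / v0_coord x) (sc (v0_coord x) v0) \<in> T"
      using subspace_scale[OF T] by blast
    then show False
      using False nonzero by simp
  qed
  have "\<phi> x = 0" if "\<phi> \<in> dual.vir_span" and "x \<in> T" for \<phi> x
    using that
  proof (induction arbitrary: x rule: dual.vir_span.induct)
    case (vir_span_mode \<phi> k)
    then show ?case
      using T_inv by (simp add: rho_dual_def dtheta_Wmode_1 del: One_nat_def)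
  qed (simp_all add: coord fscale_def)
  then have "T \<subseteq> {0}"
    using dual_vir_span_common_kernel by blast
  then show ?thesis
    using subspace_0[OF T] by blast
qed

lemma is_L_vir_Wmode_1: "is_L_vir sc (\<lambda>k. \<rho> (Wmode 1 k)) c 0 v0"
  unfolding is_L_vir_def
proof (intro conjI allI impI)
  show "vector_space sc"
    by unfold_locales
  show "Vector_Spaces.linear sc sc (\<rho> (Wmode 1 k))" for k
    unfolding module_hom_iff_linear[symmetric] Wmode_1
    by unfold_locales (simp_all add: rho_add rho_scale sigma_odd_minus sigma_odd_cvar)
  show "\<rho> (Wmode 1 m) (\<rho> (Wmode 1 n) x) - \<rho> (Wmode 1 n) (\<rho> (Wmode 1 m) x) =
      sc (of_int (m - n)) (\<rho> (Wmode 1 (m + n)) x) + (if m = - n then sc (of_int (m ^ 3 - m) / 12 * c) x else 0)"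
    for m n x
    by (rule Wmode_1_commutator) simp
  show "v0 \<noteq> 0"
    by (rule v0_nonzero)
  show "\<rho> (Wmode 1 k) v0 = 0" if "0 < k" for k
    unfolding Wmode_1 using that by (simp add: v0_annihilated sigma_odd_minus sigma_odd_cvar)
  show "\<rho> (Wmode 1 0) v0 = sc 0 v0"
    unfolding Wmode_1 by (simp add: v0_annihilated sigma_odd_minus sigma_odd_cvar)
  show "S = {0} \<or> S = UNIV" if "module.subspace sc S \<and> (\<forall>k. \<forall>v\<in>S. \<rho> (Wmode 1 k) v \<in> S)" for S
    using that Virasoro_irreducible by blast
qed

end

end

theorem mainTheorem19:
  fixes sc :: "complex \<Rightarrow> 'v::ab_group_add \<Rightarrow> 'v"
    and \<rho> :: "dop \<Rightarrow> 'v \<Rightarrow> 'v" and v0 :: 'v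
  assumes V: "is_Vplus sc (1/2) \<rho> v0"
  shows "(\<forall>n. odd n \<longrightarrow>
            (\<forall>S. module.subspace sc S \<and> v0 \<in> S \<and>
                 (\<forall>k. \<forall>v\<in>S. \<rho> (Wmode 1 k) v \<in> S)
               \<longrightarrow> \<rho> (Wmode n (- int n - 1)) v0 \<in> S))
       \<and> is_L_vir sc (\<lambda>k. \<rho> (Wmode 1 k)) (1/2) 0 v0"
proof -
  interpret Vplus_model sc "1/2" \<rho> v0
    by (rule Vplus_model.intro[OF V])
  have "S = UNIV" if "module.subspace sc S" and "v0 \<in> S" and "\<forall>k. \<forall>v\<in>S. \<rho> (Wmode 1 k) v \<in> S" for S
    using vir_span_minimal[OF that(1,2)] that(3) vir_span_eq_UNIV[OF refl] by blast
  then show ?thesis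
    using is_L_vir_Wmode_1[OF refl] by blast
qed

end
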